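(* Let $(X,d)$ be a separable metric space admitting a weak convergence and let $p\ge1$. Suppose $(\Omega,\mathcal{F},\mathbb{P})$ is a probability space with expectation $\mathbb{E}$ supporting an independent, identically distributed sequence $Y_1,Y_2,\ldots$ of $X$-valued random variables with common distribution $\mu$, and let $\bar\mu_n:=\frac1n\sum_{i=1}^n\delta_{Y_i}$. If $\int_X d^{p-1}(x,y)\,d\mu(y)=\mathbb{E}[d^{p-1}(x,Y_1)]<\infty$ for some (equivalently, all) $x\in X$, then $$\max_{\bar x_n\in M_p(\bar\mu_n)}\min_{x\in M_p(\mu)} d(\bar x_n,x)\to 0$$ holds $\mathbb{P}$-almost surely.
   Context: A convergence $c$ on a set $X$ is a rule assigning at most one point of $X$ as the "limit" of each sequence in $X$, such that whenever a sequence has limit $x$, every subsequence also has limit $x$. A convergence $w$ on $X$ is a weak convergence for $(X,d)$ if: (W1) whenever $\sup_n d(x_n,y)<\infty$ for some $y$, some subsequence converges in $w$ to some point of $X$; (W2) whenever $x_n\to x$ in $w$, $d(x,y)\le\liminf_n d(x_n,y)$ for all $y\in X$; (W3) whenever $x_n\to x$ in $w$ and $d(x_n,y)\to d(x,y)$ for some $y\in X$, then $d(x_n,x)\to0$. $(X,d)$ admits a weak convergence if such a $w$ exists. For a Borel probability measure $\nu$ with $\int d^{p-1}(x,y)\,d\nu(y)<\infty$, $W_p(\nu,x,x'):=\int_X (d^p(x,y)-d^p(x',y))\,d\nu(y)$ and $M_p(\nu):=\{x\in X: W_p(\nu,x,x')\le 0 \text{ for all } x'\in X\}$ (the Fréchet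 $p$-mean set). *)

theory Defs
  imports "HOL-Probability.Probability"
begin

definition is_convergence :: "((nat \<Rightarrow> 'a) \<Rightarrow> 'a \<Rightarrow> bool) \<Rightarrow> bool" where
  "is_convergence c \<longleftrightarrow>
     (\<forall>s x y. c s x \<and> c s y \<longrightarrow> x = y) \<and>
     (\<forall>s x (r::nat\<Rightarrow>nat). c s x \<and> strict_mono r \<longrightarrow> c (s \<circ> r) x)"

definition is_weak_convergence :: "((nat \<Rightarrow> 'a::metric_space) \<Rightarrow> 'a \<Rightarrow> bool) \<Rightarrow> bool" where
  "is_weak_convergence c \<longleftrightarrow> is_convergence c \<and>
     (\<forall>s y. (\<exists>B. \<forall>n. dist (s n) y \<le> B) \<longrightarrow> (\<exists>(r::nat\<Rightarrow>nat) x. strict_mono r \<and> c (s \<circ> r) x)) \<and>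
     (\<forall>s x. c s x \<longrightarrow> (\<forall>y. ereal (dist x y) \<le> liminf (\<lambda>n. ereal (dist (s n) y)))) \<and>
     (\<forall>s x y. c s x \<and> (\<lambda>n. dist (s n) y) \<longlonglongrightarrow> dist x y \<longrightarrow> (\<lambda>n. dist (s n) x) \<longlonglongrightarrow> 0)"

definition admits_weak_convergence :: "'a::metric_space itself \<Rightarrow> bool" where
  "admits_weak_convergence _ \<longleftrightarrow> (\<exists>c::(nat \<Rightarrow> 'a) \<Rightarrow> 'a \<Rightarrow> bool. is_weak_convergence c)"

definition separable_space :: "'a::metric_space itself \<Rightarrow> bool" where
  "separable_space _ \<longleftrightarrow> (\<exists>D::'a set. countable D \<and> closure D = UNIV)"

definition Wp :: "real \<Rightarrow> 'a::metric_space measure \<Rightarrow> 'a \<Rightarrow> 'a \<Rightarrow> real" where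
  "Wp p \<nu> x x' = (\<integral>y. dist x y powr p - dist x' y powr p \<partial>\<nu>)"

definition Mp :: "real \<Rightarrow> 'a::metric_space measure \<Rightarrow> 'a set" where
  "Mp p \<nu> = {x. \<forall>x'. Wp p \<nu> x x' \<le> 0}"

text \<open>Empirical measure (1/n) sum_{i<n} delta_{Y_i omega} (for n \<ge> 1).\<close>
definition empirical_measure :: "(nat \<Rightarrow> 'b \<Rightarrow> 'a) \<Rightarrow> nat \<Rightarrow> 'b \<Rightarrow> 'a measure" where
  "empirical_measure Y n \<omega> = measure_pmf (map_pmf (\<lambda>i. Y i \<omega>) (pmf_of_set {..<n}))"

end

theory Submission
  imports Defs
begin

text \<open>
  The strong law of large numbers (proved below along Etemadi's lines: truncation, Chebyshev's
  inequality along the subsequences \<open>\<lfloor>\<alpha>^n\<rfloor>\<close>, Borel-Cantelli, and interpolation between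
  consecutive terms) makes almost every sample path typical: its empirical averages converge to
  the mean for every function of a fixed countable family. The family consists of the costs
  \<open>d(z\<^sub>j,.)^p - d(x\<^sub>0,.)^p\<close> at the points of a dense sequence, indicators of balls and tails of
  the moment of order \<open>p - 1\<close>, and lower bounds for \<open>d(x,.)^p - d(x\<^sub>0,.)^p\<close> derived from
  finitely many rational constraints \<open>d(x,z\<^sub>j) > r\<close>.

  Along a typical path the sample Frechet means eventually lie in a fixed ball. Given any
  subsequence of them, (W1) provides a further subsequence converging weakly to some \<open>x\<^sup>*\<close>. By
  (W2) every rational constraint satisfied by \<open>x\<^sup>*\<close> is eventually satisfied along it, so the
  sample minimality passes to the limit through the lower bounds: \<open>x\<^sup>*\<close> is a Frechet mean of
  \<open>\<mu>\<close>. A strict version of the same argument at a point of the support of \<open>\<mu>\<close> gives a point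
  \<open>y\<close> with \<open>d(x\<^sub>k,y) \<rightarrow> d(x\<^sup>*,y)\<close> along a further subsequence, and (W3) turns this into
  \<open>d(x\<^sub>k,x\<^sup>*) \<rightarrow> 0\<close>.
\<close>

section \<open>Strong law of large numbers\<close>

definition floor_pow :: "real \<Rightarrow> nat \<Rightarrow> nat" where
  "floor_pow \<alpha> n = nat \<lfloor>\<alpha> ^ n\<rfloor>"

context
  fixes \<alpha> :: real
  assumes \<alpha>: "1 < \<alpha>"
begin

lemma of_nat_floor_pow: "real (floor_pow \<alpha> n) = of_int \<lfloor>\<alpha> ^ n\<rfloor>"
  using \<alpha> by (simp add: floor_pow_def one_le_power)

lemma floor_pow_le: "real (floor_pow \<alpha> n) \<le> \<alpha> ^ n"
  unfolding of_nat_floor_pow by simp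

lemma floor_pow_gt: "\<alpha> ^ n - 1 < real (floor_pow \<alpha> n)"
  unfolding of_nat_floor_pow by linarith

lemma floor_pow_pos: "0 < floor_pow \<alpha> n"
  using floor_pow_gt[of n] \<alpha> one_le_power[of \<alpha> n] by linarith

lemma floor_pow_ge_half: "\<alpha> ^ n / 2 \<le> real (floor_pow \<alpha> n)"
  using floor_pow_gt[of n] floor_pow_pos[of n] by linarith

lemma mono_floor_pow: "mono (floor_pow \<alpha>)"
  unfolding floor_pow_def using \<alpha> by (intro monoI nat_mono floor_mono power_increasing) auto

lemma filterlim_floor_pow: "filterlim (floor_pow \<alpha>) at_top sequentially"
  unfolding filterlim_at_top
proof
  fix Z :: nat
  obtain n0 where "real Z + 1 < \<alpha> ^ n0"
    using real_arch_pow[OF \<alpha>] by blast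
  moreover have "\<alpha> ^ n0 \<le> \<alpha> ^ n" if "n0 \<le> n" for n
    using \<alpha> that by (intro power_increasing) auto
  ultimately have "real Z < real (floor_pow \<alpha> n)" if "n0 \<le> n" for n
    using floor_pow_gt[of n] that by fastforce
  then show "\<forall>\<^sub>F n in sequentially. Z \<le> floor_pow \<alpha> n"
    by (intro eventually_sequentiallyI[of n0]) (simp add: less_imp_le)
qed

lemma floor_pow_ratio: "(\<lambda>n. real (floor_pow \<alpha> (Suc n)) / real (floor_pow \<alpha> n)) \<longlonglongrightarrow> \<alpha>"
proof -
  have rel: "(\<lambda>n. real (floor_pow \<alpha> n) / \<alpha> ^ n) \<longlonglongrightarrow> 1"
  proof (rule tendsto_sandwich)
    show "\<forall>\<^sub>F n in sequentially. 1 - inverse (\<alpha> ^ n) \<le> real (floor_pow \<alpha> n) / \<alpha> ^ n"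
    proof (intro always_eventually allI)
      fix n
      have "1 - inverse (\<alpha> ^ n) = (\<alpha> ^ n - 1) / \<alpha> ^ n"
        using \<alpha> by (simp add: field_simps)
      also have "\<dots> \<le> real (floor_pow \<alpha> n) / \<alpha> ^ n"
        using floor_pow_gt[of n] \<alpha> by (intro divide_right_mono) auto
      finally show "1 - inverse (\<alpha> ^ n) \<le> real (floor_pow \<alpha> n) / \<alpha> ^ n" .
    qed
    show "\<forall>\<^sub>F n in sequentially. real (floor_pow \<alpha> n) / \<alpha> ^ n \<le> 1"
      using floor_pow_le \<alpha> by (intro always_eventually allI) simp
    show "(\<lambda>n. 1 - inverse (\<alpha> ^ n)) \<longlonglongrightarrow> 1"
      using tendsto_diff[OF tendsto_const LIMSEQ_inverse_realpow_zero[OF \<alpha>], of 1] by simp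
  qed simp
  have eq: "real (floor_pow \<alpha> (Suc n)) / \<alpha> ^ Suc n / (real (floor_pow \<alpha> n) / \<alpha> ^ n) * \<alpha>
      = real (floor_pow \<alpha> (Suc n)) / real (floor_pow \<alpha> n)" for n
    using \<alpha> floor_pow_pos[of n] by (simp add: field_simps)
  have "(\<lambda>n. real (floor_pow \<alpha> (Suc n)) / \<alpha> ^ Suc n / (real (floor_pow \<alpha> n) / \<alpha> ^ n) * \<alpha>)
      \<longlonglongrightarrow> 1 / 1 * \<alpha>"
    by (intro tendsto_intros LIMSEQ_Suc[OF rel] rel) simp
  then show ?thesis
    unfolding eq by simp
qed

end

lemma block_index_exists:
  fixes k :: "nat \<Rightarrow> nat"
  assumes k: "mono k" "filterlim k at_top sequentially" and N: "k n0 \<le> N"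
  shows "\<exists>n\<ge>n0. k n \<le> N \<and> N < k (Suc n)"
proof -
  obtain n1 where "\<And>n. n1 \<le> n \<Longrightarrow> Suc N \<le> k n"
    using k(2) by (auto simp: filterlim_at_top eventually_sequentially)
  then have "N < k (Suc n1)"
    by (simp add: Suc_le_eq)
  define n where "n = (LEAST n. N < k (Suc n))"
  have n: "N < k (Suc n)"
    unfolding n_def by (rule LeastI) fact
  have "n0 \<le> n"
  proof (rule ccontr)
    assume "\<not> n0 \<le> n"
    then have "k (Suc n) \<le> k n0"
      by (intro monoD[OF k(1)]) simp
    with n N show False
      by simp
  qed
  moreover have "k n \<le> N"
  proof (cases n)
    case 0
    then show ?thesis
      using monoD[OF k(1), of 0 n0] N by simp
  next
    case (Suc m)
    then have "\<not> N < k (Suc m)"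
      using not_less_Least[of m "\<lambda>n. N < k (Suc n)"] unfolding n_def by simp
    then show ?thesis
      using Suc by simp
  qed
  ultimately show ?thesis
    using n by blast
qed

lemma eventually_sequentially_blocks:
  fixes k :: "nat \<Rightarrow> nat"
  assumes k: "mono k" "filterlim k at_top sequentially"
    and blocks: "\<forall>\<^sub>F n in sequentially. \<forall>N. k n \<le> N \<and> N < k (Suc n) \<longrightarrow> P N"
  shows "\<forall>\<^sub>F N in sequentially. P N"
proof -
  obtain n0 where n0: "\<And>n N. n0 \<le> n \<Longrightarrow> k n \<le> N \<Longrightarrow> N < k (Suc n) \<Longrightarrow> P N"
    using blocks by (auto simp: eventually_sequentially)
  show ?thesis
    using block_index_exists[OF k] n0 by (intro eventually_sequentiallyI[of "k n0"]) blast
qed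

lemma mono_average_between:
  fixes S :: "nat \<Rightarrow> real"
  assumes S: "mono S" "\<And>N. 0 \<le> S N" and N: "0 < K" "K \<le> N" "N \<le> K'"
  shows "S K / K' \<le> S N / N" and "S N / N \<le> S K' / K"
proof -
  have "S K \<le> S N" "S N \<le> S K'"
    using monoD[OF S(1)] N(2,3) by auto
  moreover have "0 < real K" "real K \<le> real N" "real N \<le> real K'"
    using N by auto
  ultimately show "S K / K' \<le> S N / N" "S N / N \<le> S K' / K"
    using S(2) by (auto intro!: frac_le)
qed

lemma eventually_average_less:
  fixes S :: "nat \<Rightarrow> real"
  assumes S: "mono S" "\<And>N. 0 \<le> S N" and \<alpha>: "1 < \<alpha>"
    and lim: "(\<lambda>n. S (floor_pow \<alpha> n) / floor_pow \<alpha> n) \<longlonglongrightarrow> m" and b: "m * \<alpha> < b"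
  shows "\<forall>\<^sub>F N in sequentially. S N / N < b"
proof -
  define k where "k = floor_pow \<alpha>"
  have k: "mono k" "filterlim k at_top sequentially" "\<And>n. 0 < k n"
    unfolding k_def using \<alpha> by (simp_all add: mono_floor_pow filterlim_floor_pow floor_pow_pos)
  have eq: "S (k (Suc n)) / k (Suc n) * (k (Suc n) / k n) = S (k (Suc n)) / k n" for n
    using k(3)[of "Suc n"] by simp
  have "(\<lambda>n. S (k (Suc n)) / k (Suc n) * (k (Suc n) / k n)) \<longlonglongrightarrow> m * \<alpha>"
    unfolding k_def by (intro tendsto_intros LIMSEQ_Suc[OF lim] floor_pow_ratio \<alpha>)
  then have "\<forall>\<^sub>F n in sequentially. S (k (Suc n)) / k n < b"
    unfolding eq using b by (rule order_tendstoD(2))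
  then have "\<forall>\<^sub>F n in sequentially. \<forall>N. k n \<le> N \<and> N < k (Suc n) \<longrightarrow> S N / N < b"
  proof (rule eventually_mono, intro allI impI)
    fix n N assume "S (k (Suc n)) / k n < b" "k n \<le> N \<and> N < k (Suc n)"
    then show "S N / N < b"
      using mono_average_between(2)[OF S k(3), of n N "k (Suc n)"] by linarith
  qed
  then show ?thesis
    by (rule eventually_sequentially_blocks[OF k(1,2)])
qed

lemma eventually_average_greater:
  fixes S :: "nat \<Rightarrow> real"
  assumes S: "mono S" "\<And>N. 0 \<le> S N" and \<alpha>: "1 < \<alpha>"
    and lim: "(\<lambda>n. S (floor_pow \<alpha> n) / floor_pow \<alpha> n) \<longlonglongrightarrow> m" and a: "a < m / \<alpha>"
  shows "\<forall>\<^sub>F N in sequentially. a < S N / N"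
proof -
  define k where "k = floor_pow \<alpha>"
  have k: "mono k" "filterlim k at_top sequentially" "\<And>n. 0 < k n"
    unfolding k_def using \<alpha> by (simp_all add: mono_floor_pow filterlim_floor_pow floor_pow_pos)
  have eq: "S (k n) / k n / (k (Suc n) / k n) = S (k n) / k (Suc n)" for n
    using k(3)[of n] by simp
  have "(\<lambda>n. S (k n) / k n / (k (Suc n) / k n)) \<longlonglongrightarrow> m / \<alpha>"
    unfolding k_def using \<alpha> by (intro tendsto_intros lim floor_pow_ratio) auto
  then have "\<forall>\<^sub>F n in sequentially. a < S (k n) / k (Suc n)"
    unfolding eq using a by (rule order_tendstoD(1))
  then have "\<forall>\<^sub>F n in sequentially. \<forall>N. k n \<le> N \<and> N < k (Suc n) \<longrightarrow> a < S N / N"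
  proof (rule eventually_mono, intro allI impI)
    fix n N assume "a < S (k n) / k (Suc n)" "k n \<le> N \<and> N < k (Suc n)"
    then show "a < S N / N"
      using mono_average_between(1)[OF S k(3), of n N "k (Suc n)"] by linarith
  qed
  then show ?thesis
    by (rule eventually_sequentially_blocks[OF k(1,2)])
qed

lemma tendsto_average_floor_pow:
  fixes S :: "nat \<Rightarrow> real" and \<alpha> :: "nat \<Rightarrow> real"
  assumes S: "mono S" "\<And>N. 0 \<le> S N"
    and \<alpha>: "\<And>j. 1 < \<alpha> j" "\<alpha> \<longlonglongrightarrow> 1"
    and lim: "\<And>j. (\<lambda>n. S (floor_pow (\<alpha> j) n) / floor_pow (\<alpha> j) n) \<longlonglongrightarrow> m"
  shows "(\<lambda>N. S N / N) \<longlonglongrightarrow> m"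
proof (rule order_tendstoI)
  fix b assume "m < b"
  moreover have "(\<lambda>j. m * \<alpha> j) \<longlonglongrightarrow> m * 1"
    by (intro tendsto_intros \<alpha>)
  ultimately have "\<forall>\<^sub>F j in sequentially. m * \<alpha> j < b"
    by (intro order_tendstoD(2)) auto
  then obtain j where "m * \<alpha> j < b"
    by (auto simp: eventually_sequentially)
  then show "\<forall>\<^sub>F N in sequentially. S N / N < b"
    by (rule eventually_average_less[OF S \<alpha>(1) lim])
next
  fix a assume "a < m"
  moreover have "(\<lambda>j. m / \<alpha> j) \<longlonglongrightarrow> m / 1"
    by (intro tendsto_intros \<alpha>) simp
  ultimately have "\<forall>\<^sub>F j in sequentially. a < m / \<alpha> j"
    by (intro order_tendstoD(1)) auto
  then obtain j where "a < m / \<alpha> j"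
    by (auto simp: eventually_sequentially)
  then show "\<forall>\<^sub>F N in sequentially. a < S N / N"
    by (rule eventually_average_greater[OF S \<alpha>(1) lim])
qed

lemma sum_of_bool_le:
  fixes x :: real
  assumes "0 \<le> x"
  shows "(\<Sum>n<N. of_bool (real n + 1 \<le> x)) \<le> x"
proof -
  have "{n\<in>{..<N}. real n + 1 \<le> x} \<subseteq> {..<nat \<lfloor>x\<rfloor>}"
  proof
    fix n assume "n \<in> {n\<in>{..<N}. real n + 1 \<le> x}"
    then have "int n + 1 \<le> \<lfloor>x\<rfloor>"
      by (simp add: le_floor_iff)
    then show "n \<in> {..<nat \<lfloor>x\<rfloor>}"
      by simp
  qed
  then have "card {n\<in>{..<N}. real n + 1 \<le> x} \<le> nat \<lfloor>x\<rfloor>"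
    by (metis card_lessThan card_mono finite_lessThan)
  then have "real (card {n\<in>{..<N}. real n + 1 \<le> x}) \<le> real (nat \<lfloor>x\<rfloor>)"
    by linarith
  also have "\<dots> \<le> x"
    using assms by simp
  finally show ?thesis
    by (simp add: sum.If_cases Int_def)
qed

lemma sum_inverse_square_tail:
  "(\<Sum>i\<in>{m..<I}. 1 / (real i + 1)\<^sup>2) \<le> 2 / (real m + 1)"
proof -
  have "(\<Sum>i\<in>{m..<I}. 1 / (real i + 1)\<^sup>2) \<le> 2 / (real m + 1) - 2 / (real I + 1)" if "m \<le> I"
    using that
  proof (induction I rule: nat_induct_at_least)
    case (Suc I)
    have "2 / (real I + 1) - 2 / (real (Suc I) + 1) = 2 / ((real I + 1) * (real I + 2))"
      by (simp add: field_simps)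
    moreover have "1 / (real I + 1)\<^sup>2 \<le> 2 / ((real I + 1) * (real I + 2))"
      by (simp add: divide_simps power2_eq_square algebra_simps)
    ultimately show ?case
      using Suc by simp
  qed simp
  then show ?thesis
    by (cases "m \<le> I") (auto intro: order_trans)
qed

lemma sum_truncated_square_le:
  fixes x :: real
  assumes "0 \<le> x"
  shows "(\<Sum>i<I. (if x < real i + 1 then x\<^sup>2 else 0) / (real i + 1)\<^sup>2) \<le> 2 * x"
proof -
  define m where "m = nat \<lfloor>x\<rfloor>"
  have below: "x < real i + 1 \<longleftrightarrow> m \<le> i" for i
    unfolding m_def using assms by linarith
  have "(\<Sum>i<I. (if x < real i + 1 then x\<^sup>2 else 0) / (real i + 1)\<^sup>2)
      = (\<Sum>i\<in>{m..<I}. x\<^sup>2 / (real i + 1)\<^sup>2)"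
    by (rule sum.mono_neutral_cong_right) (auto simp: below)
  also have "\<dots> = x\<^sup>2 * (\<Sum>i\<in>{m..<I}. 1 / (real i + 1)\<^sup>2)"
    by (simp add: sum_distrib_left)
  also have "\<dots> \<le> x\<^sup>2 * (2 / (real m + 1))"
    by (intro mult_left_mono sum_inverse_square_tail) auto
  also have "\<dots> \<le> 2 * x"
  proof -
    have "x * x \<le> x * (real m + 1)"
      using below[of m] assms by (intro mult_left_mono) auto
    then show ?thesis
      by (simp add: field_simps power2_eq_square)
  qed
  finally show ?thesis .
qed

lemma sum_geometric_below_le:
  fixes \<beta> c :: real
  assumes \<beta>: "0 < \<beta>" "\<beta> < 1" and c: "0 \<le> c"
  shows "(\<Sum>n<N. if \<beta> ^ n \<le> c then \<beta> ^ n else 0) \<le> c / (1 - \<beta>)"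
proof (cases "\<exists>n. \<beta> ^ n \<le> c")
  case False
  then show ?thesis
    using \<beta> c by simp
next
  case True
  define n0 where "n0 = (LEAST n. \<beta> ^ n \<le> c)"
  have n0: "\<beta> ^ n0 \<le> c"
    unfolding n0_def using True by (rule LeastI_ex)
  have "(\<Sum>n<N. if \<beta> ^ n \<le> c then \<beta> ^ n else 0) = (\<Sum>n\<in>{n\<in>{..<N}. \<beta> ^ n \<le> c}. \<beta> ^ n)"
    by (simp add: sum.If_cases Int_def)
  also have "\<dots> \<le> (\<Sum>n\<in>{n0..<n0 + N}. \<beta> ^ n)"
    using \<beta> by (intro sum_mono2) (auto simp: n0_def intro: Least_le)
  also have "\<dots> = (\<Sum>j<N. \<beta> ^ (j + n0))"
    using sum.shift_bounds_nat_ivl[of "\<lambda>n. \<beta> ^ n" 0 n0 N] by (simp add: atLeast0LessThan add.commute)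
  also have "\<dots> = \<beta> ^ n0 * (\<Sum>j<N. \<beta> ^ j)"
    by (simp add: power_add sum_distrib_left mult.commute)
  also have "\<dots> \<le> c * (1 / (1 - \<beta>))"
  proof (intro mult_mono n0)
    show "(\<Sum>j<N. \<beta> ^ j) \<le> 1 / (1 - \<beta>)"
      using \<beta> by (simp add: sum_gp_strict divide_right_mono)
  qed (use \<beta> c in \<open>auto intro: sum_nonneg\<close>)
  finally show ?thesis
    by simp
qed

lemma inverse_square_floor_pow_le:
  assumes \<alpha>: "1 < \<alpha>" and i: "i < floor_pow \<alpha> n"
  shows "inverse (\<alpha>\<^sup>2) ^ n \<le> 1 / (real i + 1)\<^sup>2" and "1 / (real (floor_pow \<alpha> n))\<^sup>2 \<le> 4 * inverse (\<alpha>\<^sup>2) ^ n"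
proof -
  have pow: "inverse (\<alpha>\<^sup>2) ^ n = 1 / (\<alpha> ^ n)\<^sup>2"
    by (simp add: power_inverse divide_inverse flip: power_mult power_mult_distrib)
      (simp add: mult.commute power_mult)
  have "real i + 1 \<le> \<alpha> ^ n"
    using i floor_pow_le[OF \<alpha>, of n] by linarith
  then have "(real i + 1)\<^sup>2 \<le> (\<alpha> ^ n)\<^sup>2"
    by (intro power_mono) auto
  moreover have "0 < (\<alpha> ^ n)\<^sup>2 * (real i + 1)\<^sup>2"
    using \<alpha> by (intro mult_pos_pos zero_less_power) auto
  ultimately show "inverse (\<alpha>\<^sup>2) ^ n \<le> 1 / (real i + 1)\<^sup>2"
    unfolding pow by (intro divide_left_mono) auto
  have "(\<alpha> ^ n / 2)\<^sup>2 \<le> (real (floor_pow \<alpha> n))\<^sup>2"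
    using floor_pow_ge_half[OF \<alpha>, of n] \<alpha> by (intro power_mono) auto
  then have "1 / (real (floor_pow \<alpha> n))\<^sup>2 \<le> 1 / (\<alpha> ^ n / 2)\<^sup>2"
    using \<alpha> floor_pow_pos[OF \<alpha>, of n] by (intro divide_left_mono mult_pos_pos zero_less_power) auto
  also have "\<dots> = 4 * inverse (\<alpha>\<^sup>2) ^ n"
    unfolding pow by (simp add: field_simps)
  finally show "1 / (real (floor_pow \<alpha> n))\<^sup>2 \<le> 4 * inverse (\<alpha>\<^sup>2) ^ n" .
qed

lemma sum_inverse_square_floor_pow:
  assumes \<alpha>: "1 < \<alpha>"
  shows "(\<Sum>n\<in>{n\<in>{..<N}. i < floor_pow \<alpha> n}. 1 / (real (floor_pow \<alpha> n))\<^sup>2)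
    \<le> 4 / (1 - inverse (\<alpha>\<^sup>2)) / (real i + 1)\<^sup>2"
proof -
  define \<beta> where "\<beta> = inverse (\<alpha>\<^sup>2)"
  have \<beta>: "0 < \<beta>" "\<beta> < 1"
    using \<alpha> by (auto simp: \<beta>_def inverse_less_1_iff one_less_power)
  have "(\<Sum>n\<in>{n\<in>{..<N}. i < floor_pow \<alpha> n}. 1 / (real (floor_pow \<alpha> n))\<^sup>2)
      = (\<Sum>n<N. if i < floor_pow \<alpha> n then 1 / (real (floor_pow \<alpha> n))\<^sup>2 else 0)"
    by (rule sum.inter_filter) simp
  also have "\<dots> \<le> 4 * (\<Sum>n<N. if \<beta> ^ n \<le> 1 / (real i + 1)\<^sup>2 then \<beta> ^ n else 0)"
    unfolding sum_distrib_left \<beta>_def using inverse_square_floor_pow_le[OF \<alpha>] \<beta>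
    by (intro sum_mono) (auto simp: \<beta>_def)
  also have "\<dots> \<le> 4 * (1 / (real i + 1)\<^sup>2 / (1 - \<beta>))"
    by (intro mult_left_mono sum_geometric_below_le \<beta>) auto
  also have "\<dots> = 4 / (1 - \<beta>) / (real i + 1)\<^sup>2"
    by simp
  finally show ?thesis
    unfolding \<beta>_def .
qed

lemma summable_floor_pow_blocks:
  fixes v :: "nat \<Rightarrow> real"
  assumes \<alpha>: "1 < \<alpha>" and v: "\<And>i. 0 \<le> v i" and V: "\<And>K. (\<Sum>i<K. v i / (real i + 1)\<^sup>2) \<le> V"
  shows "summable (\<lambda>n. (\<Sum>i<floor_pow \<alpha> n. v i) / (real (floor_pow \<alpha> n))\<^sup>2)"
proof (rule summableI_nonneg_bounded)
  define C where "C = 4 / (1 - inverse (\<alpha>\<^sup>2))"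
  have "0 \<le> C"
    using \<alpha> by (auto simp: C_def inverse_le_1_iff one_le_power)
  fix N
  define K where "K = floor_pow \<alpha> N"
  have "{i\<in>{..<K}. i < floor_pow \<alpha> n} = {..<floor_pow \<alpha> n}" if "n < N" for n
    using monoD[OF mono_floor_pow[OF \<alpha>], of n N] that by (auto simp: K_def)
  then have "(\<Sum>n<N. (\<Sum>i<floor_pow \<alpha> n. v i) / (real (floor_pow \<alpha> n))\<^sup>2)
      = (\<Sum>n<N. \<Sum>i\<in>{i\<in>{..<K}. i < floor_pow \<alpha> n}. v i / (real (floor_pow \<alpha> n))\<^sup>2)"
    by (simp add: sum_divide_distrib)
  also have "\<dots> = (\<Sum>i<K. v i * (\<Sum>n\<in>{n\<in>{..<N}. i < floor_pow \<alpha> n}. 1 / (real (floor_pow \<alpha> n))\<^sup>2))"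
    by (subst sum.swap_restrict) (auto simp: sum_distrib_left)
  also have "\<dots> \<le> (\<Sum>i<K. v i * (C / (real i + 1)\<^sup>2))"
    unfolding C_def by (intro sum_mono mult_left_mono v sum_inverse_square_floor_pow \<alpha>)
  also have "\<dots> = C * (\<Sum>i<K. v i / (real i + 1)\<^sup>2)"
    by (simp add: sum_distrib_left mult_ac)
  also have "\<dots> \<le> C * V"
    by (intro mult_left_mono V \<open>0 \<le> C\<close>)
  finally show "(\<Sum>n<N. (\<Sum>i<floor_pow \<alpha> n. v i) / (real (floor_pow \<alpha> n))\<^sup>2) \<le> C * V" .
qed (use v in \<open>auto intro!: divide_nonneg_nonneg sum_nonneg\<close>)

lemma cesaro_mean_tendsto:
  fixes a :: "nat \<Rightarrow> real"
  assumes "a \<longlonglongrightarrow> L"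
  shows "(\<lambda>N. (\<Sum>i<N. a i) / N) \<longlonglongrightarrow> L"
proof (rule LIMSEQ_I)
  fix r :: real assume r: "0 < r"
  obtain N0 where N0: "\<And>i. N0 \<le> i \<Longrightarrow> \<bar>a i - L\<bar> < r / 2"
    using LIMSEQ_D[OF assms, of "r / 2"] r by auto
  define B where "B = (\<Sum>i<N0. \<bar>a i - L\<bar>)"
  obtain N1 :: nat where N1: "2 * B / r < N1"
    using reals_Archimedean2 by blast
  show "\<exists>N'. \<forall>N\<ge>N'. norm ((\<Sum>i<N. a i) / N - L) < r"
  proof (intro exI allI impI)
    fix N assume N: "max (max N0 N1) 1 \<le> N"
    have "(\<Sum>i<N. \<bar>a i - L\<bar>) = B + (\<Sum>i\<in>{N0..<N}. \<bar>a i - L\<bar>)"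
      unfolding B_def using sum.atLeastLessThan_concat[of 0 N0 N "\<lambda>i. \<bar>a i - L\<bar>"] N
      by (simp add: atLeast0LessThan)
    also have "(\<Sum>i\<in>{N0..<N}. \<bar>a i - L\<bar>) \<le> (\<Sum>i\<in>{N0..<N}. r / 2)"
      using N0 by (intro sum_mono) (auto intro: less_imp_le)
    also have "(\<Sum>i\<in>{N0..<N}. r / 2) \<le> real N * (r / 2)"
      using r by simp
    also have "B < real N * (r / 2)"
    proof -
      have "r * real N1 \<le> r * real N"
        using N r by (intro mult_left_mono) auto
      moreover have "2 * B < r * real N1"
        using N1 r by (simp add: field_simps)
      ultimately have "2 * B < r * real N"
        by linarith
      then show ?thesis
        by (simp add: field_simps)
    qed
    finally have "(\<Sum>i<N. \<bar>a i - L\<bar>) < r * real N"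
      by simp
    then have "\<bar>\<Sum>i<N. a i - L\<bar> < r * real N"
      using sum_abs[of "\<lambda>i. a i - L" "{..<N}"] by linarith
    moreover have "0 < real N"
      using N by simp
    ultimately show "norm ((\<Sum>i<N. a i) / N - L) < r"
      by (simp add: sum_subtractf field_simps abs_divide)
  qed
qed

lemma sum_eventually_eq:
  fixes a b :: "nat \<Rightarrow> 'b::ab_group_add"
  assumes "\<forall>\<^sub>F i in sequentially. a i = b i"
  obtains D where "\<forall>\<^sub>F N in sequentially. (\<Sum>i<N. a i) = (\<Sum>i<N. b i) + D"
proof -
  obtain i0 where i0: "\<And>i. i0 \<le> i \<Longrightarrow> a i = b i"
    using assms by (auto simp: eventually_sequentially)
  have "\<forall>\<^sub>F N in sequentially. (\<Sum>i<N. a i) = (\<Sum>i<N. b i) + (\<Sum>i<i0. a i - b i)"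
  proof (rule eventually_sequentiallyI[of i0])
    fix N assume "i0 \<le> N"
    then have "(\<Sum>i<N. a i - b i) = (\<Sum>i<i0. a i - b i)"
      using i0 by (intro sum.mono_neutral_right) auto
    then show "(\<Sum>i<N. a i) = (\<Sum>i<N. b i) + (\<Sum>i<i0. a i - b i)"
      by (simp add: sum_subtractf algebra_simps)
  qed
  then show ?thesis
    by (rule that)
qed

lemma (in prob_space) indep_vars_integrable_square:
  fixes Z :: "'i \<Rightarrow> 'a \<Rightarrow> real"
  assumes "indep_vars (\<lambda>_. borel) Z I" "\<And>i. i \<in> I \<Longrightarrow> integrable M (\<lambda>\<omega>. (Z i \<omega>)\<^sup>2)" "i \<in> I"
  shows "integrable M (Z i)"
proof -
  have "Z i \<in> borel_measurable M"
    using assms(1,3) by (simp add: indep_vars_def)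
  then show ?thesis
    using assms(2)[OF assms(3)] by (rule square_integrable_imp_integrable)
qed

lemma (in prob_space) covariance_indep:
  fixes Z :: "'i \<Rightarrow> 'a \<Rightarrow> real"
  assumes indep: "indep_vars (\<lambda>_. borel) Z I" and ij: "i \<in> I" "j \<in> I"
    and sq: "\<And>i. i \<in> I \<Longrightarrow> integrable M (\<lambda>\<omega>. (Z i \<omega>)\<^sup>2)"
  defines "C k \<omega> \<equiv> Z k \<omega> - expectation (Z k)"
  shows "integrable M (\<lambda>\<omega>. C i \<omega> * C j \<omega>)"
    and "expectation (\<lambda>\<omega>. C i \<omega> * C j \<omega>) = (if i = j then variance (Z i) else 0)"
proof -
  have int: "k \<in> I \<Longrightarrow> integrable M (Z k)" for k
    using indep_vars_integrable_square[OF indep sq] .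
  have C_int: "k \<in> I \<Longrightarrow> integrable M (C k)" for k
    unfolding C_def using int by simp
  have C_mean: "k \<in> I \<Longrightarrow> expectation (C k) = 0" for k
    unfolding C_def using int by (simp add: prob_space)
  have "integrable M (\<lambda>\<omega>. C i \<omega> * C j \<omega>) \<and>
      expectation (\<lambda>\<omega>. C i \<omega> * C j \<omega>) = (if i = j then variance (Z i) else 0)"
  proof (cases "i = j")
    case True
    have "integrable M (\<lambda>\<omega>. (C i \<omega>)\<^sup>2)"
      unfolding C_def power2_diff using sq[OF ij(1)] int[OF ij(1)]
      by (intro Bochner_Integration.integrable_diff Bochner_Integration.integrable_add
          integrable_mult_right integrable_mult_left) auto
    moreover have "variance (Z i) = expectation (\<lambda>\<omega>. (C i \<omega>)\<^sup>2)"
      by (simp add: C_def)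
    ultimately show ?thesis
      using True by (simp add: power2_eq_square)
  next
    case False
    have "indep_vars (\<lambda>_. borel) (\<lambda>k \<omega>. Z k \<omega> - expectation (Z k)) I"
      by (rule indep_vars_compose2[OF indep, where Y="\<lambda>k x. x - expectation (Z k)"]) simp
    then have "indep_vars (\<lambda>_. borel) C {i, j}"
      unfolding C_def[abs_def] by (rule indep_vars_subset) (use ij in auto)
    then have "integrable M (\<lambda>\<omega>. \<Prod>k\<in>{i, j}. C k \<omega>) \<and>
        expectation (\<lambda>\<omega>. \<Prod>k\<in>{i, j}. C k \<omega>) = (\<Prod>k\<in>{i, j}. expectation (C k))"
      using C_int ij by (intro conjI indep_vars_integrable indep_vars_lebesgue_integral) auto
    then show ?thesis
      using False C_mean ij by simp
  qed
  then show "integrable M (\<lambda>\<omega>. C i \<omega> * C j \<omega>)"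
    and "expectation (\<lambda>\<omega>. C i \<omega> * C j \<omega>) = (if i = j then variance (Z i) else 0)"
    by simp_all
qed

lemma (in prob_space) variance_sum_indep:
  fixes Z :: "'i \<Rightarrow> 'a \<Rightarrow> real"
  assumes indep: "indep_vars (\<lambda>_. borel) Z I" and I: "finite I"
    and sq: "\<And>i. i \<in> I \<Longrightarrow> integrable M (\<lambda>\<omega>. (Z i \<omega>)\<^sup>2)"
  shows "variance (\<lambda>\<omega>. \<Sum>i\<in>I. Z i \<omega>) = (\<Sum>i\<in>I. variance (Z i))"
proof -
  define C where "C i \<omega> = Z i \<omega> - expectation (Z i)" for i \<omega>
  note C_prod = covariance_indep[OF indep _ _ sq, folded C_def]
  have "expectation (\<lambda>\<omega>. \<Sum>i\<in>I. Z i \<omega>) = (\<Sum>i\<in>I. expectation (Z i))"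
    using indep_vars_integrable_square[OF indep sq] by (rule Bochner_Integration.integral_sum)
  moreover have "(\<Sum>i\<in>I. Z i \<omega>) - (\<Sum>i\<in>I. expectation (Z i)) = (\<Sum>i\<in>I. C i \<omega>)" for \<omega>
    by (simp add: C_def sum_subtractf)
  ultimately have "variance (\<lambda>\<omega>. \<Sum>i\<in>I. Z i \<omega>) = expectation (\<lambda>\<omega>. \<Sum>i\<in>I. \<Sum>j\<in>I. C i \<omega> * C j \<omega>)"
    by (simp add: power2_eq_square sum_product)
  also have "\<dots> = (\<Sum>i\<in>I. \<Sum>j\<in>I. expectation (\<lambda>\<omega>. C i \<omega> * C j \<omega>))"
    using C_prod(1) by (simp add: Bochner_Integration.integral_sum Bochner_Integration.integrable_sum)
  also have "\<dots> = (\<Sum>i\<in>I. \<Sum>j\<in>I. if i = j then variance (Z i) else 0)"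
    using C_prod(2) by (intro sum.cong) (auto simp: C_def)
  also have "\<dots> = (\<Sum>i\<in>I. variance (Z i))"
    using I by simp
  finally show ?thesis .
qed

definition cutoff :: "nat \<Rightarrow> real \<Rightarrow> real" where
  "cutoff i x = (if x < real i + 1 then x else 0)"

lemma measurable_cutoff[measurable]: "cutoff i \<in> borel_measurable borel"
  unfolding cutoff_def by measurable

lemma cutoff_bounds:
  assumes "0 \<le> x"
  shows "0 \<le> cutoff i x" "cutoff i x \<le> x" "cutoff i x \<le> real i + 1"
  using assms by (auto simp: cutoff_def)

locale iid_nonneg = prob_space +
  fixes X :: "nat \<Rightarrow> 'a \<Rightarrow> real"
  assumes measurable_X[measurable]: "\<And>i. X i \<in> borel_measurable M"
    and indep_X: "indep_vars (\<lambda>_. borel) X UNIV"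
    and distr_X: "\<And>i. distr M borel (X i) = distr M borel (X 0)"
    and nonneg_X: "\<And>i \<omega>. 0 \<le> X i \<omega>"
    and integrable_X: "integrable M (X 0)"
begin

lemma integral_comp_X:
  fixes h :: "real \<Rightarrow> real"
  assumes [measurable]: "h \<in> borel_measurable borel"
  shows "(\<integral>\<omega>. h (X i \<omega>) \<partial>M) = (\<integral>\<omega>. h (X 0 \<omega>) \<partial>M)"
  using integral_distr[of "X i" M borel h] integral_distr[of "X 0" M borel h]
  by (simp add: distr_X[of i])

lemma integrable_cutoff_X: "integrable M (\<lambda>\<omega>. cutoff i (X j \<omega>))"
  using cutoff_bounds[OF nonneg_X] by (intro integrable_const_bound[where B="real i + 1"]) auto

lemma integrable_cutoff_X_square: "integrable M (\<lambda>\<omega>. (cutoff i (X j \<omega>))\<^sup>2)"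
proof (intro integrable_const_bound[where B="(real i + 1)\<^sup>2"] AE_I2)
  fix \<omega>
  show "norm ((cutoff i (X j \<omega>))\<^sup>2) \<le> (real i + 1)\<^sup>2"
    using cutoff_bounds[OF nonneg_X, of i j \<omega>] by (simp add: power_mono)
qed simp

lemma AE_eventually_cutoff_eq: "AE \<omega> in M. \<forall>\<^sub>F n in sequentially. cutoff n (X n \<omega>) = X n \<omega>"
proof -
  define A where "A n = {\<omega>\<in>space M. real n + 1 \<le> X n \<omega>}" for n
  have [measurable]: "A n \<in> sets M" for n
    unfolding A_def by measurable
  have "measure M (A n) = (\<integral>\<omega>. indicator {real n + 1..} (X n \<omega>) \<partial>M)" for n
    by (subst Bochner_Integration.integral_cong[where g="indicator (A n)"]) (auto simp: A_def indicator_def)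
  also have "\<dots> n = expectation (\<lambda>\<omega>. indicator {real n + 1..} (X 0 \<omega>))" for n
    by (rule integral_comp_X) simp
  finally have measure_A: "measure M (A n) = expectation (\<lambda>\<omega>. indicator {real n + 1..} (X 0 \<omega>))" for n .
  have integrable_indicator: "integrable M (\<lambda>\<omega>. indicator {real n + 1..} (X 0 \<omega>) :: real)" for n
    by (intro integrable_const_bound[where B=1]) auto
  have "summable (\<lambda>n. measure M (A n))"
  proof (rule summableI_nonneg_bounded)
    fix N
    have "(\<Sum>n<N. measure M (A n)) = expectation (\<lambda>\<omega>. \<Sum>n<N. indicator {real n + 1..} (X 0 \<omega>))"
      unfolding measure_A by (intro Bochner_Integration.integral_sum[symmetric] integrable_indicator)
    also have "\<dots> \<le> expectation (X 0)"
      using integrable_X sum_of_bool_le[OF nonneg_X] integrable_indicator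
      by (intro integral_mono Bochner_Integration.integrable_sum) (auto simp: indicator_def)
    finally show "(\<Sum>n<N. measure M (A n)) \<le> expectation (X 0)" .
  qed simp
  then have "AE \<omega> in M. \<forall>\<^sub>F n in sequentially. \<omega> \<in> space M - A n"
    by (intro borel_cantelli_AE1) (auto simp: less_top[symmetric])
  then show ?thesis
  proof eventually_elim
    case (elim \<omega>)
    then show ?case
      by (rule eventually_mono) (auto simp: A_def cutoff_def)
  qed
qed

lemma expectation_cutoff_tendsto: "(\<lambda>i. expectation (\<lambda>\<omega>. cutoff i (X i \<omega>))) \<longlonglongrightarrow> expectation (X 0)"
proof -
  have "expectation (\<lambda>\<omega>. cutoff i (X i \<omega>)) = expectation (\<lambda>\<omega>. cutoff i (X 0 \<omega>))" for i
    by (rule integral_comp_X) simp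
  moreover have "(\<lambda>i. expectation (\<lambda>\<omega>. cutoff i (X 0 \<omega>))) \<longlonglongrightarrow> expectation (X 0)"
  proof (rule integral_dominated_convergence[where w="X 0"])
    show "AE \<omega> in M. (\<lambda>i. cutoff i (X 0 \<omega>)) \<longlonglongrightarrow> X 0 \<omega>"
    proof (rule AE_I2)
      fix \<omega>
      obtain n0 :: nat where "X 0 \<omega> < real n0"
        using reals_Archimedean2 by blast
      then have "\<forall>\<^sub>F i in sequentially. cutoff i (X 0 \<omega>) = X 0 \<omega>"
        by (intro eventually_sequentiallyI[of n0]) (auto simp: cutoff_def)
      then show "(\<lambda>i. cutoff i (X 0 \<omega>)) \<longlonglongrightarrow> X 0 \<omega>"
        by (rule tendsto_eventually)
    qed
    show "AE \<omega> in M. norm (cutoff i (X 0 \<omega>)) \<le> X 0 \<omega>" for i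
      using cutoff_bounds[OF nonneg_X] by auto
  qed (simp_all add: integrable_X)
  ultimately show ?thesis
    by simp
qed

lemma sum_variance_cutoff_le:
  "(\<Sum>i<K. variance (\<lambda>\<omega>. cutoff i (X i \<omega>)) / (real i + 1)\<^sup>2) \<le> 2 * expectation (X 0)"
proof -
  have "variance (\<lambda>\<omega>. cutoff i (X i \<omega>)) \<le> expectation (\<lambda>\<omega>. (cutoff i (X 0 \<omega>))\<^sup>2)" for i
    using variance_eq[OF integrable_cutoff_X integrable_cutoff_X_square, of i i]
      integral_comp_X[of "\<lambda>x. (cutoff i x)\<^sup>2" i] by simp
  then have "(\<Sum>i<K. variance (\<lambda>\<omega>. cutoff i (X i \<omega>)) / (real i + 1)\<^sup>2)
      \<le> (\<Sum>i<K. expectation (\<lambda>\<omega>. (cutoff i (X 0 \<omega>))\<^sup>2) / (real i + 1)\<^sup>2)"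
    by (intro sum_mono divide_right_mono) auto
  also have "\<dots> = expectation (\<lambda>\<omega>. \<Sum>i<K. (cutoff i (X 0 \<omega>))\<^sup>2 / (real i + 1)\<^sup>2)"
    using integrable_cutoff_X_square by (subst Bochner_Integration.integral_sum) auto
  also have "\<dots> \<le> expectation (\<lambda>\<omega>. 2 * X 0 \<omega>)"
  proof (rule integral_mono)
    fix \<omega>
    have "(\<Sum>i<K. (cutoff i (X 0 \<omega>))\<^sup>2 / (real i + 1)\<^sup>2)
        = (\<Sum>i<K. (if X 0 \<omega> < real i + 1 then (X 0 \<omega>)\<^sup>2 else 0) / (real i + 1)\<^sup>2)"
      by (intro sum.cong) (auto simp: cutoff_def)
    also have "\<dots> \<le> 2 * X 0 \<omega>"
      by (rule sum_truncated_square_le[OF nonneg_X])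
    finally show "(\<Sum>i<K. (cutoff i (X 0 \<omega>))\<^sup>2 / (real i + 1)\<^sup>2) \<le> 2 * X 0 \<omega>" .
  qed (use integrable_cutoff_X_square integrable_X in auto)
  finally show ?thesis
    by simp
qed

definition cutoff_sum :: "nat \<Rightarrow> 'a \<Rightarrow> real" where
  "cutoff_sum K \<omega> = (\<Sum>i<K. cutoff i (X i \<omega>))"

lemma measurable_cutoff_sum[measurable]: "cutoff_sum K \<in> borel_measurable M"
  unfolding cutoff_sum_def by measurable

lemma expectation_cutoff_sum: "expectation (cutoff_sum K) = (\<Sum>i<K. expectation (\<lambda>\<omega>. cutoff i (X i \<omega>)))"
  unfolding cutoff_sum_def[abs_def] by (intro Bochner_Integration.integral_sum integrable_cutoff_X)

lemma integrable_cutoff_sum_square: "integrable M (\<lambda>\<omega>. (cutoff_sum K \<omega>)\<^sup>2)"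
proof (intro integrable_const_bound[where B="(\<Sum>i<K. real i + 1)\<^sup>2"] AE_I2)
  fix \<omega>
  have "\<bar>cutoff_sum K \<omega>\<bar> \<le> (\<Sum>i<K. real i + 1)"
    unfolding cutoff_sum_def using cutoff_bounds[OF nonneg_X]
    by (intro order_trans[OF sum_abs] sum_mono) auto
  then show "norm ((cutoff_sum K \<omega>)\<^sup>2) \<le> (\<Sum>i<K. real i + 1)\<^sup>2"
    by (metis abs_ge_zero power2_abs power_mono real_norm_def norm_power)
qed simp

lemma variance_cutoff_sum: "variance (cutoff_sum K) = (\<Sum>i<K. variance (\<lambda>\<omega>. cutoff i (X i \<omega>)))"
proof -
  have "indep_vars (\<lambda>_. borel) (\<lambda>i \<omega>. cutoff i (X i \<omega>)) {..<K}"
    by (intro indep_vars_subset[OF indep_vars_compose2[OF indep_X]]) auto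
  then show ?thesis
    unfolding cutoff_sum_def[abs_def]
    by (intro variance_sum_indep integrable_cutoff_X_square) auto
qed

lemma AE_eventually_floor_pow_deviation_lt:
  fixes \<epsilon> :: real
  assumes \<alpha>: "1 < \<alpha>" and \<epsilon>: "0 < \<epsilon>"
  shows "AE \<omega> in M. \<forall>\<^sub>F n in sequentially.
    \<bar>cutoff_sum (floor_pow \<alpha> n) \<omega> - expectation (cutoff_sum (floor_pow \<alpha> n))\<bar> < \<epsilon> * real (floor_pow \<alpha> n)"
proof -
  define k where "k = floor_pow \<alpha>"
  define A where "A n = {\<omega>\<in>space M. \<epsilon> * real (k n) \<le> \<bar>cutoff_sum (k n) \<omega> - expectation (cutoff_sum (k n))\<bar>}" for n
  have [measurable]: "A n \<in> sets M" for n
    unfolding A_def by measurable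
  define v where "v i = variance (\<lambda>\<omega>. cutoff i (X i \<omega>))" for i
  have "summable (\<lambda>n. (\<Sum>i<k n. v i) / (real (k n))\<^sup>2)"
    unfolding k_def v_def using sum_variance_cutoff_le
    by (intro summable_floor_pow_blocks[OF \<alpha>] variance_positive)
  then have bound_summable: "summable (\<lambda>n. 1 / \<epsilon>\<^sup>2 * ((\<Sum>i<k n. v i) / (real (k n))\<^sup>2))"
    by (rule summable_mult)
  have Chebyshev: "measure M (A n) \<le> 1 / \<epsilon>\<^sup>2 * ((\<Sum>i<k n. v i) / (real (k n))\<^sup>2)" for n
  proof -
    have "0 < \<epsilon> * real (k n)"
      using \<epsilon> floor_pow_pos[OF \<alpha>] by (simp add: k_def)
    then have "measure M (A n) \<le> variance (cutoff_sum (k n)) / (\<epsilon> * real (k n))\<^sup>2"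
      unfolding A_def by (intro Chebyshev_inequality integrable_cutoff_sum_square) auto
    then show ?thesis
      by (simp add: variance_cutoff_sum v_def power_mult_distrib)
  qed
  have "summable (\<lambda>n. measure M (A n))"
    by (rule summable_comparison_test'[OF bound_summable]) (use Chebyshev in simp)
  then have "AE \<omega> in M. \<forall>\<^sub>F n in sequentially. \<omega> \<in> space M - A n"
    by (intro borel_cantelli_AE1) (auto simp: less_top[symmetric])
  then show ?thesis
  proof eventually_elim
    case (elim \<omega>)
    then show ?case
      by (rule eventually_mono) (auto simp: A_def k_def)
  qed
qed

lemma AE_floor_pow_deviation_tendsto:
  assumes \<alpha>: "1 < \<alpha>"
  shows "AE \<omega> in M. (\<lambda>n. (cutoff_sum (floor_pow \<alpha> n) \<omega> - expectation (cutoff_sum (floor_pow \<alpha> n)))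
    / floor_pow \<alpha> n) \<longlonglongrightarrow> 0"
proof -
  have "AE \<omega> in M. \<forall>j::nat. \<forall>\<^sub>F n in sequentially.
    \<bar>cutoff_sum (floor_pow \<alpha> n) \<omega> - expectation (cutoff_sum (floor_pow \<alpha> n))\<bar> < 1 / Suc j * floor_pow \<alpha> n"
    by (subst AE_all_countable) (intro allI AE_eventually_floor_pow_deviation_lt \<alpha>, simp)
  then show ?thesis
  proof eventually_elim
    case (elim \<omega>)
    show ?case
    proof (rule LIMSEQ_I)
      fix r :: real assume "0 < r"
      then obtain j where j: "1 / Suc j < r"
        using reals_Archimedean by (auto simp: inverse_eq_divide)
      obtain n0 where n0: "\<And>n. n0 \<le> n \<Longrightarrow>
          \<bar>cutoff_sum (floor_pow \<alpha> n) \<omega> - expectation (cutoff_sum (floor_pow \<alpha> n))\<bar> < 1 / Suc j * floor_pow \<alpha> n"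
        using elim[rule_format, of j] by (auto simp: eventually_sequentially)
      show "\<exists>n0. \<forall>n\<ge>n0. norm ((cutoff_sum (floor_pow \<alpha> n) \<omega> - expectation (cutoff_sum (floor_pow \<alpha> n)))
          / floor_pow \<alpha> n - 0) < r"
      proof (intro exI allI impI)
        fix n assume "n0 \<le> n"
        then have "\<bar>cutoff_sum (floor_pow \<alpha> n) \<omega> - expectation (cutoff_sum (floor_pow \<alpha> n))\<bar> / floor_pow \<alpha> n
            < 1 / Suc j"
          using n0 floor_pow_pos[OF \<alpha>, of n] by (simp add: pos_divide_less_eq)
        then show "norm ((cutoff_sum (floor_pow \<alpha> n) \<omega> - expectation (cutoff_sum (floor_pow \<alpha> n)))
            / floor_pow \<alpha> n - 0) < r"
          using j by (simp add: abs_divide)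
      qed
    qed
  qed
qed

lemma AE_floor_pow_average_tendsto:
  assumes \<alpha>: "1 < \<alpha>"
  shows "AE \<omega> in M. (\<lambda>n. (\<Sum>i<floor_pow \<alpha> n. X i \<omega>) / floor_pow \<alpha> n) \<longlonglongrightarrow> expectation (X 0)"
  using AE_floor_pow_deviation_tendsto[OF \<alpha>] AE_eventually_cutoff_eq
proof eventually_elim
  case (elim \<omega>)
  define k where "k = floor_pow \<alpha>"
  have k: "filterlim k at_top sequentially" "\<And>n. 0 < k n"
    unfolding k_def using \<alpha> by (simp_all add: filterlim_floor_pow floor_pow_pos)
  have k_real: "filterlim (\<lambda>n. real (k n)) at_infinity sequentially"
    using filterlim_at_top_imp_at_infinity[OF filterlim_compose[OF filterlim_real_sequentially k(1)]] .
  have "\<forall>\<^sub>F i in sequentially. X i \<omega> = cutoff i (X i \<omega>)"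
    using elim(2) by (rule eventually_mono) simp
  then obtain D where D: "\<forall>\<^sub>F N in sequentially. (\<Sum>i<N. X i \<omega>) = cutoff_sum N \<omega> + D"
    unfolding cutoff_sum_def by (rule sum_eventually_eq)
  define dev where "dev n = (cutoff_sum (k n) \<omega> - expectation (cutoff_sum (k n))) / k n" for n
  define mean where "mean n = (\<Sum>i<k n. expectation (\<lambda>\<omega>. cutoff i (X i \<omega>))) / k n" for n
  have "dev \<longlonglongrightarrow> 0"
    using elim(1) unfolding dev_def k_def .
  moreover have "mean \<longlonglongrightarrow> expectation (X 0)"
    unfolding mean_def using filterlim_compose[OF cesaro_mean_tendsto[OF expectation_cutoff_tendsto] k(1)] .
  moreover have "(\<lambda>n. D / k n) \<longlonglongrightarrow> 0"
    by (rule tendsto_divide_0[OF tendsto_const k_real])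
  ultimately have "(\<lambda>n. dev n + mean n + D / k n) \<longlonglongrightarrow> 0 + expectation (X 0) + 0"
    by (intro tendsto_add)
  moreover have "\<forall>\<^sub>F n in sequentially. dev n + mean n + D / k n = (\<Sum>i<k n. X i \<omega>) / k n"
    using filterlim_iff[THEN iffD1, OF k(1), rule_format, OF D]
  proof (rule eventually_mono)
    fix n assume "(\<Sum>i<k n. X i \<omega>) = cutoff_sum (k n) \<omega> + D"
    then show "dev n + mean n + D / k n = (\<Sum>i<k n. X i \<omega>) / k n"
      unfolding dev_def mean_def expectation_cutoff_sum using k(2)[of n] by (simp add: field_simps)
  qed
  ultimately show ?case
    unfolding k_def by (simp add: Lim_transform_eventually)
qed

theorem strong_law_nonneg: "AE \<omega> in M. (\<lambda>N. (\<Sum>i<N. X i \<omega>) / N) \<longlonglongrightarrow> expectation (X 0)"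
proof -
  define \<alpha> :: "nat \<Rightarrow> real" where "\<alpha> j = 1 + 1 / Suc j" for j
  have \<alpha>: "1 < \<alpha> j" for j
    by (simp add: \<alpha>_def)
  have "\<alpha> \<longlonglongrightarrow> 1 + 0"
    unfolding \<alpha>_def by (intro tendsto_add tendsto_const LIMSEQ_Suc[OF lim_const_over_n])
  then have \<alpha>_lim: "\<alpha> \<longlonglongrightarrow> 1"
    by simp
  have "AE \<omega> in M. \<forall>j. (\<lambda>n. (\<Sum>i<floor_pow (\<alpha> j) n. X i \<omega>) / floor_pow (\<alpha> j) n) \<longlonglongrightarrow> expectation (X 0)"
    by (subst AE_all_countable) (intro allI AE_floor_pow_average_tendsto \<alpha>)
  then show ?thesis
  proof eventually_elim
    case (elim \<omega>)
    show ?case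
      using elim nonneg_X by (intro tendsto_average_floor_pow[OF _ _ \<alpha> \<alpha>_lim] monoI sum_mono2 sum_nonneg) auto
  qed
qed

end

lemma strong_law_of_large_numbers_nonneg:
  fixes Y :: "nat \<Rightarrow> 'a \<Rightarrow> 'b" and f :: "'b \<Rightarrow> real"
  assumes M: "prob_space M" and Y: "\<And>i. Y i \<in> measurable M N"
    and indep: "prob_space.indep_vars M (\<lambda>_. N) Y UNIV"
    and distr: "\<And>i. distr M N (Y i) = \<mu>"
    and f: "f \<in> borel_measurable N" "\<And>x. 0 \<le> f x" "integrable \<mu> f"
  shows "AE \<omega> in M. (\<lambda>n. (\<Sum>i<n. f (Y i \<omega>)) / real n) \<longlonglongrightarrow> integral\<^sup>L \<mu> f"
proof -
  interpret prob_space M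
    by (rule M)
  have distr_f: "distr M borel (\<lambda>\<omega>. f (Y i \<omega>)) = distr \<mu> borel f" for i
    using distr_distr[OF f(1) Y, of i] by (simp add: distr comp_def)
  interpret iid_nonneg M "\<lambda>i \<omega>. f (Y i \<omega>)"
  proof
    show "integrable M (\<lambda>\<omega>. f (Y 0 \<omega>))"
      using f(3) integrable_distr_eq[OF Y f(1)] by (simp add: distr)
  qed (use Y f distr_f in \<open>auto intro: indep_vars_compose2[OF indep]\<close>)
  have "expectation (\<lambda>\<omega>. f (Y 0 \<omega>)) = integral\<^sup>L \<mu> f"
    using integral_distr[OF Y f(1), of 0] by (simp add: distr)
  then show ?thesis
    using strong_law_nonneg by simp
qed

theorem strong_law_of_large_numbers:
  fixes Y :: "nat \<Rightarrow> 'a \<Rightarrow> 'b" and f :: "'b \<Rightarrow> real"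
  assumes M: "prob_space M" and Y: "\<And>i. Y i \<in> measurable M N"
    and indep: "prob_space.indep_vars M (\<lambda>_. N) Y UNIV"
    and distr: "\<And>i. distr M N (Y i) = \<mu>"
    and f: "integrable \<mu> f"
  shows "AE \<omega> in M. (\<lambda>n. (\<Sum>i<n. f (Y i \<omega>)) / real n) \<longlonglongrightarrow> integral\<^sup>L \<mu> f"
proof -
  have "sets \<mu> = sets N"
    using sets_distr[of M N "Y 0"] by (simp add: distr)
  then have "f \<in> borel_measurable N"
    using borel_measurable_integrable[OF f] measurable_cong_sets by blast
  then have parts: "AE \<omega> in M. (\<lambda>n. (\<Sum>i<n. max (f (Y i \<omega>)) 0) / n) \<longlonglongrightarrow> integral\<^sup>L \<mu> (\<lambda>x. max (f x) 0)"
    "AE \<omega> in M. (\<lambda>n. (\<Sum>i<n. max (- f (Y i \<omega>)) 0) / n) \<longlonglongrightarrow> integral\<^sup>L \<mu> (\<lambda>x. max (- f x) 0)"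
    using f by (intro strong_law_of_large_numbers_nonneg[OF M Y indep distr] integrable_max; simp)+
  have integral_f: "integral\<^sup>L \<mu> f = integral\<^sup>L \<mu> (\<lambda>x. max (f x) 0) - integral\<^sup>L \<mu> (\<lambda>x. max (- f x) 0)"
  proof -
    have "(\<lambda>x. max (f x) 0 - max (- f x) 0) = f"
      by (auto simp: fun_eq_iff max_def)
    moreover have "integral\<^sup>L \<mu> (\<lambda>x. max (f x) 0 - max (- f x) 0)
        = integral\<^sup>L \<mu> (\<lambda>x. max (f x) 0) - integral\<^sup>L \<mu> (\<lambda>x. max (- f x) 0)"
      using f by (intro Bochner_Integration.integral_diff integrable_max) auto
    ultimately show ?thesis
      by simp
  qed
  from parts show ?thesis
  proof eventually_elim
    case (elim \<omega>)
    have "(\<Sum>i<n. f (Y i \<omega>)) / n = (\<Sum>i<n. max (f (Y i \<omega>)) 0) / n - (\<Sum>i<n. max (- f (Y i \<omega>)) 0) / n" for n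
      by (simp add: diff_divide_distrib[symmetric] sum_subtractf[symmetric])
        (intro disjI2 sum.cong; auto simp: max_def)
    then show ?case
      using tendsto_diff[OF elim] integral_f by simp
  qed
qed

section \<open>Frechet functionals\<close>

lemma powr_diff_le:
  fixes a b p :: real
  assumes p: "1 \<le> p" and ab: "0 \<le> a" "a \<le> b"
  shows "b powr p - a powr p \<le> p * b powr (p - 1) * (b - a)"
proof (cases "a = 0")
  case True
  have "b powr p = b * b powr (p - 1)"
    using ab p by (cases "b = 0") (auto simp: powr_mult_base)
  also have "\<dots> \<le> p * b powr (p - 1) * b"
    using mult_right_mono[of 1 p "b powr (p - 1) * b"] ab p by (simp add: mult_ac)
  finally show ?thesis
    using True p by simp
next
  case False
  then have a: "0 < a"
    using ab by simp
  show ?thesis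
  proof (cases "a = b")
    case False
    then have "a < b"
      using ab by simp
    moreover have "((\<lambda>t. t powr p) has_real_derivative p * t powr (p - 1)) (at t)" if "a \<le> t" for t
      using a that by (intro has_real_derivative_powr) auto
    ultimately obtain t where t: "a < t" "t < b" "b powr p - a powr p = (b - a) * (p * t powr (p - 1))"
      using MVT2[of a b "\<lambda>t. t powr p" "\<lambda>t. p * t powr (p - 1)"] by blast
    have "t powr (p - 1) \<le> b powr (p - 1)"
      using t a p by (intro powr_mono2) auto
    then show ?thesis
      using t ab p by (simp add: mult_left_mono mult.commute mult.left_commute)
  qed simp
qed

lemma powr_add_le:
  fixes u B p :: real
  assumes "0 \<le> u" "0 \<le> B" "1 \<le> p"
  shows "(u + B) powr (p - 1) \<le> 2 powr (p - 1) * (u powr (p - 1) + B powr (p - 1))"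
proof -
  have "(u + B) powr (p - 1) \<le> (2 * max u B) powr (p - 1)"
    using assms by (intro powr_mono2) auto
  also have "\<dots> = 2 powr (p - 1) * max u B powr (p - 1)"
    using assms by (simp add: powr_mult)
  also have "max u B powr (p - 1) \<le> u powr (p - 1) + B powr (p - 1)"
    by (simp add: max_def)
  finally show ?thesis
    by simp
qed

lemma measurable_dist_left[measurable]: "(\<lambda>y. dist x y) \<in> borel_measurable borel"
  by (intro borel_measurable_continuous_onI continuous_intros)

(* A pair (j, r) stands for the constraint r < dist x (z j), which forces
   dist x y \<ge> r - dist (z j) y. Rational bounds keep the set of constraint lists countable. *)
primrec dist_minorant :: "(nat \<Rightarrow> 'a::metric_space) \<Rightarrow> (nat \<times> rat) list \<Rightarrow> 'a \<Rightarrow> real" where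
  "dist_minorant z [] y = 0"
| "dist_minorant z (c # L) y = max (max (of_rat (snd c) - dist (z (fst c)) y) 0) (dist_minorant z L y)"

definition far_from :: "(nat \<Rightarrow> 'a::metric_space) \<Rightarrow> (nat \<times> rat) list \<Rightarrow> 'a \<Rightarrow> bool" where
  "far_from z L x \<longleftrightarrow> (\<forall>(j, r)\<in>set L. of_rat r < dist x (z j))"

lemma dist_minorant_nonneg: "0 \<le> dist_minorant z L y"
  by (induction L) auto

lemma dist_minorant_ge: "(j, r) \<in> set L \<Longrightarrow> of_rat r - dist (z j) y \<le> dist_minorant z L y"
  by (induction L) auto

lemma dist_minorant_le:
  "0 \<le> u \<Longrightarrow> (\<And>j r. (j, r) \<in> set L \<Longrightarrow> of_rat r - dist (z j) y \<le> u) \<Longrightarrow> dist_minorant z L y \<le> u"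
  by (induction L) auto

lemma dist_minorant_append: "dist_minorant z (L1 @ L2) y = max (dist_minorant z L1 y) (dist_minorant z L2 y)"
  by (induction L1) (auto simp: max_def dist_minorant_nonneg)

lemma far_from_append: "far_from z (L1 @ L2) x \<longleftrightarrow> far_from z L1 x \<and> far_from z L2 x"
  by (auto simp: far_from_def)

lemma dist_minorant_le_dist:
  assumes "far_from z L x"
  shows "dist_minorant z L y \<le> dist x y"
proof (rule dist_minorant_le)
  fix j r assume "(j, r) \<in> set L"
  then show "of_rat r - dist (z j) y \<le> dist x y"
    using assms dist_triangle[of x "z j" y] by (fastforce simp: far_from_def dist_commute)
qed simp

lemma dist_minorant_le_add_dist: "dist_minorant z L y \<le> dist_minorant z L x + dist x y"
proof (rule dist_minorant_le)
  fix j r assume "(j, r) \<in> set L"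
  then show "of_rat r - dist (z j) y \<le> dist_minorant z L x + dist x y"
    using dist_minorant_ge[of j r L z x] dist_triangle[of "z j" x y] dist_commute[of x y] by linarith
qed (simp add: dist_minorant_nonneg add_nonneg_nonneg)

lemma max_dist_minorant_le:
  "max (dist w y) (dist_minorant z L y) \<le> dist x0 y + (dist w x0 + dist_minorant z L x0)"
proof -
  have "dist w y \<le> dist x0 y + (dist w x0 + dist_minorant z L x0)"
    using dist_triangle[of w y x0] dist_minorant_nonneg[of z L x0] by linarith
  moreover have "dist_minorant z L y \<le> dist x0 y + (dist w x0 + dist_minorant z L x0)"
    using dist_minorant_le_add_dist[of z L y x0] zero_le_dist[of w x0] by linarith
  ultimately show ?thesis
    by simp
qed

lemma measurable_dist_minorant[measurable]: "dist_minorant z L \<in> borel_measurable borel"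
proof (induction L)
  case (Cons c L)
  have "dist_minorant z (c # L) = (\<lambda>y. max (max (of_rat (snd c) - dist (z (fst c)) y) 0) (dist_minorant z L y))"
    by (simp add: fun_eq_iff)
  also have "\<dots> \<in> borel_measurable borel"
    using Cons by measurable
  finally show ?case .
qed simp

definition sample_frechet_means :: "real \<Rightarrow> (nat \<Rightarrow> 'a::metric_space) \<Rightarrow> nat \<Rightarrow> 'a set" where
  "sample_frechet_means p ys n = {x. \<forall>x'. (\<Sum>i<n. dist x (ys i) powr p) \<le> (\<Sum>i<n. dist x' (ys i) powr p)}"

lemma integral_empirical_measure:
  fixes f :: "'a \<Rightarrow> real"
  assumes "0 < n"
  shows "integral\<^sup>L (empirical_measure Y n \<omega>) f = (\<Sum>i<n. f (Y i \<omega>)) / n"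
  using assms integral_pmf_of_set[of "{..<n}" "\<lambda>i. f (Y i \<omega>)"] by (simp add: empirical_measure_def lessThan_empty_iff)

lemma Mp_empirical_measure:
  assumes "0 < n"
  shows "Mp p (empirical_measure Y n \<omega>) = sample_frechet_means p (\<lambda>i. Y i \<omega>) n"
  using assms by (simp add: Mp_def Wp_def sample_frechet_means_def integral_empirical_measure
      divide_le_0_iff sum_subtractf not_le)

locale frechet_setup =
  fixes \<mu> :: "'a::metric_space measure" and p :: real and x0 :: 'a
  assumes prob_space_\<mu>: "prob_space \<mu>" and sets_\<mu>: "sets \<mu> = sets borel" and p: "1 \<le> p"
    and moment: "integrable \<mu> (\<lambda>y. dist x0 y powr (p - 1))"
begin

sublocale prob_space \<mu>
  by (rule prob_space_\<mu>)

lemma borel_measurable_\<mu>: "borel_measurable \<mu> = borel_measurable borel"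
  by (rule measurable_cong_sets[OF sets_\<mu> refl])

(* Subtracting dist x0 y powr p makes the cost integrable when only the moment of order p - 1
   is finite; Frechet means only depend on differences of costs. *)
definition cost :: "'a \<Rightarrow> 'a \<Rightarrow> real" where
  "cost x y = dist x y powr p - dist x0 y powr p"

definition envelope :: "real \<Rightarrow> 'a \<Rightarrow> real" where
  "envelope D y = p * D * (dist x0 y + D) powr (p - 1)"

definition objective :: "'a \<Rightarrow> real" where
  "objective x = (\<integral>y. cost x y \<partial>\<mu>)"

lemma measurable_cost[measurable]: "cost x \<in> borel_measurable borel"
  unfolding cost_def[abs_def] by measurable

lemma measurable_envelope[measurable]: "envelope D \<in> borel_measurable borel"
  unfolding envelope_def[abs_def] by measurable

lemma envelope_nonneg: "0 \<le> D \<Longrightarrow> 0 \<le> envelope D y"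
  unfolding envelope_def using p by simp

lemma powr_diff_le_envelope:
  assumes "0 \<le> a" "a \<le> dist x0 y + D" "0 \<le> D"
  shows "a powr p - dist x0 y powr p \<le> envelope D y"
proof (cases "dist x0 y \<le> a")
  case True
  have "a powr p - dist x0 y powr p \<le> p * a powr (p - 1) * (a - dist x0 y)"
    using powr_diff_le[OF p zero_le_dist True] .
  also have "\<dots> \<le> p * (dist x0 y + D) powr (p - 1) * D"
    using assms p True by (intro mult_mono powr_mono2) auto
  finally show ?thesis
    by (simp add: envelope_def mult_ac)
next
  case False
  then have "a powr p \<le> dist x0 y powr p"
    using assms p by (intro powr_mono2) auto
  then show ?thesis
    using envelope_nonneg[OF assms(3), of y] by linarith
qed

lemma cost_ge:
  assumes "dist x x0 \<le> D"
  shows "- (p * D * dist x0 y powr (p - 1)) \<le> cost x y"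
proof (cases "dist x y \<le> dist x0 y")
  case True
  have "dist x0 y powr p - dist x y powr p \<le> p * dist x0 y powr (p - 1) * (dist x0 y - dist x y)"
    using powr_diff_le[OF p zero_le_dist True] .
  also have "\<dots> \<le> p * dist x0 y powr (p - 1) * D"
    using assms p dist_triangle[of x0 y x] by (intro mult_left_mono) (auto simp: dist_commute)
  finally show ?thesis
    by (simp add: cost_def mult_ac)
next
  case False
  then have "dist x0 y powr p \<le> dist x y powr p"
    using p by (intro powr_mono2) auto
  moreover have "0 \<le> p * D * dist x0 y powr (p - 1)"
    using order_trans[OF zero_le_dist assms] p by (intro mult_nonneg_nonneg) auto
  ultimately show ?thesis
    by (simp add: cost_def)
qed

lemma neg_envelope_le_cost:
  assumes "dist x x0 \<le> D"
  shows "- envelope D y \<le> cost x y"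
proof -
  have "0 \<le> D"
    using order_trans[OF zero_le_dist assms] .
  then have "p * D * dist x0 y powr (p - 1) \<le> envelope D y"
    unfolding envelope_def using p by (intro mult_left_mono powr_mono2) auto
  then show ?thesis
    using cost_ge[OF assms, of y] by linarith
qed

lemma abs_cost_le_envelope:
  assumes "dist x x0 \<le> D"
  shows "\<bar>cost x y\<bar> \<le> envelope D y"
proof -
  have "cost x y \<le> envelope D y"
    unfolding cost_def using assms dist_triangle[of x y x0] order_trans[OF zero_le_dist assms]
    by (intro powr_diff_le_envelope) (auto simp: dist_commute)
  then show ?thesis
    using neg_envelope_le_cost[OF assms, of y] by linarith
qed

lemma integrable_envelope:
  assumes "0 \<le> D"
  shows "integrable \<mu> (envelope D)"
proof (rule Bochner_Integration.integrable_bound)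
  show "integrable \<mu> (\<lambda>y. p * D * (2 powr (p - 1) * (dist x0 y powr (p - 1) + D powr (p - 1))))"
    using moment by (intro integrable_mult_right Bochner_Integration.integrable_add) auto
  show "AE y in \<mu>. norm (envelope D y)
      \<le> norm (p * D * (2 powr (p - 1) * (dist x0 y powr (p - 1) + D powr (p - 1))))"
    using assms p envelope_nonneg[OF assms]
    by (intro AE_I2) (auto simp: envelope_def intro!: mult_left_mono powr_add_le)
qed (simp add: borel_measurable_\<mu>)

lemma integrable_cost: "integrable \<mu> (cost x)"
  using abs_cost_le_envelope[of x "dist x x0"]
  by (intro Bochner_Integration.integrable_bound[OF integrable_envelope[of "dist x x0"]])
    (auto simp: borel_measurable_\<mu> envelope_nonneg)

lemma Wp_eq_objective: "Wp p \<mu> x x' = objective x - objective x'"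
proof -
  have "Wp p \<mu> x x' = (\<integral>y. cost x y - cost x' y \<partial>\<mu>)"
    by (simp add: Wp_def cost_def)
  then show ?thesis
    unfolding objective_def using integrable_cost by simp
qed

lemma Mp_iff_objective: "x \<in> Mp p \<mu> \<longleftrightarrow> (\<forall>x'. objective x \<le> objective x')"
  by (simp add: Mp_def Wp_eq_objective)

lemma objective_tendsto:
  assumes "w \<longlonglongrightarrow> w0"
  shows "(\<lambda>n. objective (w n)) \<longlonglongrightarrow> objective w0"
proof -
  obtain D where D: "\<And>n. dist (w n) x0 \<le> D"
    using convergent_imp_bounded[OF assms] by (auto simp: bounded_any_center[of _ x0] dist_commute)
  have "0 \<le> D"
    using order_trans[OF zero_le_dist D] .
  show ?thesis
    unfolding objective_def
  proof (rule integral_dominated_convergence[where w="envelope D"])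
    show "AE y in \<mu>. (\<lambda>n. cost (w n) y) \<longlonglongrightarrow> cost w0 y"
      unfolding cost_def using assms p by (intro AE_I2 tendsto_intros tendsto_powr') auto
    show "AE y in \<mu>. norm (cost (w n) y) \<le> envelope D y" for n
      using abs_cost_le_envelope[OF D] by simp
  qed (simp_all add: borel_measurable_\<mu> integrable_envelope \<open>0 \<le> D\<close>)
qed

(* The floor - envelope B loses nothing, as cost x \<ge> - envelope B whenever dist x x0 \<le> B,
   and makes lower_cost integrable although g y powr p - dist x0 y powr p need not be. *)
definition lower_cost :: "('a \<Rightarrow> real) \<Rightarrow> real \<Rightarrow> 'a \<Rightarrow> real" where
  "lower_cost g B y = max (g y powr p - dist x0 y powr p) (- envelope B y)"

lemma measurable_lower_cost[measurable]:
  assumes [measurable]: "g \<in> borel_measurable borel"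
  shows "lower_cost g B \<in> borel_measurable borel"
  unfolding lower_cost_def[abs_def] by measurable

lemma lower_cost_le_cost:
  assumes "dist x x0 \<le> B" "0 \<le> g y" "g y \<le> dist x y"
  shows "lower_cost g B y \<le> cost x y"
  using neg_envelope_le_cost[OF assms(1)] powr_mono2[of p, OF _ assms(2,3)] p
  by (auto simp: lower_cost_def cost_def)

lemma cost_le_lower_cost:
  assumes "dist x y \<le> g y"
  shows "cost x y \<le> lower_cost g B y"
  using powr_mono2[of p, OF _ zero_le_dist assms] p by (auto simp: lower_cost_def cost_def)

lemma cost_less_lower_cost:
  assumes "dist x y < g y"
  shows "cost x y < lower_cost g B y"
  using powr_less_mono2[of p "dist x y" "g y"] assms p by (auto simp: lower_cost_def cost_def)

lemma measure_eq_0_if_integral_nonpos: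
  fixes f :: "'a \<Rightarrow> real"
  assumes "integrable \<mu> f" "\<And>y. 0 \<le> f y" "integral\<^sup>L \<mu> f \<le> 0"
    and "A \<in> sets borel" "\<And>y. y \<in> A \<Longrightarrow> 0 < f y"
  shows "measure \<mu> A = 0"
proof -
  have "0 \<le> integral\<^sup>L \<mu> f"
    using assms(2) by (intro integral_nonneg_AE) auto
  then have "integral\<^sup>L \<mu> f = 0"
    using assms(3) by simp
  then have "AE y in \<mu>. f y = 0"
    using integral_nonneg_eq_0_iff_AE[OF assms(1)] assms(2) by simp
  then have "AE y in \<mu>. y \<notin> A"
    by eventually_elim (use assms(5) in force)
  then have "emeasure \<mu> A = 0"
    using AE_iff_measurable[of A \<mu> "\<lambda>y. y \<notin> A"] assms(4)
    by (simp add: sets_\<mu> sets_eq_imp_space_eq[OF sets_\<mu>])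
  then show ?thesis
    by (simp add: measure_def)
qed

lemma abs_lower_cost_le:
  assumes "0 \<le> B" "0 \<le> D" "\<And>y. 0 \<le> g y" "\<And>y. g y \<le> dist x0 y + D"
  shows "\<bar>lower_cost g B y\<bar> \<le> envelope B y + envelope D y"
  using powr_diff_le_envelope[OF assms(3,4,2), of y] envelope_nonneg[OF assms(1), of y] envelope_nonneg[OF assms(2), of y]
  by (auto simp: lower_cost_def)

lemma integrable_lower_cost:
  assumes [measurable]: "g \<in> borel_measurable borel"
    and "0 \<le> B" "0 \<le> D" "\<And>y. 0 \<le> g y" "\<And>y. g y \<le> dist x0 y + D"
  shows "integrable \<mu> (lower_cost g B)"
  using abs_lower_cost_le[OF assms(2,3,4,5)]
  by (intro Bochner_Integration.integrable_bound[OF Bochner_Integration.integrable_add[OF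
        integrable_envelope[OF assms(2)] integrable_envelope[OF assms(3)]]])
    (auto simp: borel_measurable_\<mu> envelope_nonneg assms(2,3))

lemma integrable_lower_cost_max:
  assumes "0 \<le> B"
  shows "integrable \<mu> (lower_cost (\<lambda>y. max (dist w y) (dist_minorant z L y)) B)"
proof (rule integrable_lower_cost[where D="dist w x0 + dist_minorant z L x0"])
  show "max (dist w y) (dist_minorant z L y) \<le> dist x0 y + (dist w x0 + dist_minorant z L x0)" for y
    by (rule max_dist_minorant_le)
qed (use assms in \<open>auto simp: dist_minorant_nonneg le_max_iff_disj\<close>)

lemma integral_lower_cost_tendsto:
  assumes [measurable]: "\<And>J. G J \<in> borel_measurable borel" "g \<in> borel_measurable borel"
    and "0 \<le> B" "0 \<le> D" "\<And>J y. 0 \<le> G J y" "\<And>J y. G J y \<le> dist x0 y + D"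
    and "\<And>y. (\<lambda>J. G J y) \<longlonglongrightarrow> g y"
  shows "(\<lambda>J. integral\<^sup>L \<mu> (lower_cost (G J) B)) \<longlonglongrightarrow> integral\<^sup>L \<mu> (lower_cost g B)"
proof (rule integral_dominated_convergence[where w="\<lambda>y. envelope B y + envelope D y"])
  show "AE y in \<mu>. (\<lambda>J. lower_cost (G J) B y) \<longlonglongrightarrow> lower_cost g B y"
    unfolding lower_cost_def using assms(5,7) p
    by (intro AE_I2 tendsto_intros tendsto_powr'[OF assms(7)]) (auto intro: order_trans)
  show "AE y in \<mu>. norm (lower_cost (G J) B y) \<le> envelope B y + envelope D y" for J
    using abs_lower_cost_le[OF assms(3,4) assms(5,6)[of J]] by simp
qed (use assms(3,4) in \<open>simp_all add: borel_measurable_\<mu> integrable_envelope\<close>)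

definition tail_moment :: "nat \<Rightarrow> 'a \<Rightarrow> real" where
  "tail_moment R y = indicator (- cball x0 (real R)) y * dist x0 y powr (p - 1)"

lemma measurable_tail_moment[measurable]: "tail_moment R \<in> borel_measurable borel"
  unfolding tail_moment_def[abs_def] by measurable

lemma integrable_tail_moment: "integrable \<mu> (tail_moment R)"
  by (intro Bochner_Integration.integrable_bound[OF moment])
    (auto simp: borel_measurable_\<mu> tail_moment_def indicator_def)

lemma exists_radius: "\<exists>R::nat. 3 / 4 < measure \<mu> (cball x0 R) \<and> p * integral\<^sup>L \<mu> (tail_moment R) < 1 / 4"
proof -
  have large: "\<forall>\<^sub>F R in sequentially. dist x0 y \<le> real R" for y
  proof -
    obtain n :: nat where "dist x0 y < n"
      using reals_Archimedean2 by blast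
    then show ?thesis
      by (intro eventually_sequentiallyI[of n]) (simp add: less_imp_le order_less_le_trans)
  qed
  have "(\<lambda>R. measure \<mu> (cball x0 (real R))) \<longlonglongrightarrow> measure \<mu> (\<Union>R. cball x0 (real R))"
    by (intro finite_Lim_measure_incseq) (auto simp: sets_\<mu> incseq_def)
  moreover have "(\<Union>R. cball x0 (real R)) = space \<mu>"
    by (auto simp: sets_eq_imp_space_eq[OF sets_\<mu>] real_arch_simple)
  ultimately have "\<forall>\<^sub>F R in sequentially. 3 / 4 < measure \<mu> (cball x0 (real R))"
    by (intro order_tendstoD(1)) (auto simp: prob_space)
  moreover have "(\<lambda>R. integral\<^sup>L \<mu> (tail_moment R)) \<longlonglongrightarrow> integral\<^sup>L \<mu> (\<lambda>y. 0)"
  proof (rule integral_dominated_convergence[where w="\<lambda>y. dist x0 y powr (p - 1)"])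
    show "AE y in \<mu>. (\<lambda>R. tail_moment R y) \<longlonglongrightarrow> 0"
    proof (intro AE_I2 tendsto_eventually)
      fix y
      show "\<forall>\<^sub>F R in sequentially. tail_moment R y = 0"
        using large[of y] by (rule eventually_mono) (simp add: tail_moment_def)
    qed
  qed (auto simp: borel_measurable_\<mu> moment tail_moment_def indicator_def)
  then have "\<forall>\<^sub>F R in sequentially. p * integral\<^sup>L \<mu> (tail_moment R) < 1 / 4"
    by (intro order_tendstoD(2)[where y="p * 0"] tendsto_mult tendsto_const) auto
  ultimately show ?thesis
    by (metis (mono_tags, lifting) eventually_conj eventually_happens' sequentially_bot)
qed

lemma sum_cost_le_of_sample_frechet_mean:
  assumes "x \<in> sample_frechet_means p ys n"
  shows "(\<Sum>i<n. cost x (ys i)) \<le> (\<Sum>i<n. cost x' (ys i))"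
  using assms by (simp add: sample_frechet_means_def cost_def sum_subtractf)

lemma cost_ge_far:
  assumes far: "2 * real R + 2 * real R powr p + 1 < dist x x0"
  shows "(dist x x0 - real R - real R powr p) * indicator (cball x0 (real R)) y
    - p * dist x x0 * tail_moment R y \<le> cost x y"
proof (cases "dist x0 y \<le> real R")
  case True
  have "dist x x0 - real R \<le> dist x y"
    using True dist_triangle[of x x0 y] dist_commute[of y x0] by linarith
  then have "1 \<le> dist x y"
    using far powr_ge_zero[of "real R" p] by linarith
  then have "dist x x0 - real R \<le> dist x y powr p"
    using \<open>dist x x0 - real R \<le> dist x y\<close> p powr_mono[of 1 p "dist x y"] by simp
  moreover have "dist x0 y powr p \<le> real R powr p"
    using True p by (intro powr_mono2) auto
  ultimately show ?thesis
    using True by (simp add: cost_def tail_moment_def)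
next
  case False
  then show ?thesis
    using cost_ge[of x "dist x x0" y] by (simp add: tail_moment_def)
qed

lemma sample_frechet_mean_dist_le:
  assumes x: "x \<in> sample_frechet_means p ys n"
    and inner: "real n / 2 < (\<Sum>i<n. indicator (cball x0 (real R)) (ys i))"
    and tail: "p * (\<Sum>i<n. tail_moment R (ys i)) < real n / 4"
  shows "dist x x0 \<le> 2 * real R + 2 * real R powr p + 1"
proof (rule ccontr)
  define D where "D = dist x x0"
  define a where "a = D - real R - real R powr p"
  assume "\<not> ?thesis"
  then have far: "2 * real R + 2 * real R powr p + 1 < D"
    by (simp add: D_def)
  have "(\<Sum>i<n. a * indicator (cball x0 (real R)) (ys i) - p * D * tail_moment R (ys i)) \<le> (\<Sum>i<n. cost x (ys i))"
    unfolding a_def D_def using far by (intro sum_mono cost_ge_far) (simp add: D_def)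
  also have "\<dots> \<le> (\<Sum>i<n. cost x0 (ys i))"
    by (rule sum_cost_le_of_sample_frechet_mean[OF x])
  also have "\<dots> = 0"
    by (simp add: cost_def)
  finally have "a * (\<Sum>i<n. indicator (cball x0 (real R)) (ys i)) \<le> D * (p * (\<Sum>i<n. tail_moment R (ys i)))"
    by (simp add: sum_subtractf sum_distrib_left mult_ac)
  moreover have "0 < a"
    using far powr_ge_zero[of "real R" p] unfolding a_def by linarith
  then have "a * (real n / 2) < a * (\<Sum>i<n. indicator (cball x0 (real R)) (ys i))"
    using inner by (intro mult_strict_left_mono)
  moreover have "D * (p * (\<Sum>i<n. tail_moment R (ys i))) \<le> D * (real n / 4)"
    using tail by (intro mult_left_mono) (auto simp: D_def)
  ultimately have "2 * a * real n < D * real n"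
    by linarith
  then have "2 * a < D"
    by (simp add: mult_less_cancel_right)
  then show False
    using far by (simp add: a_def)
qed

end

section \<open>Typical sample paths\<close>

lemma separable_space_dense_sequence:
  assumes "separable_space TYPE('a)"
  obtains z :: "nat \<Rightarrow> 'a::metric_space" where "\<And>y e. 0 < e \<Longrightarrow> \<exists>j. dist (z j) y < e"
proof -
  obtain D :: "'a set" where D: "countable D" "closure D = UNIV"
    using assms by (auto simp: separable_space_def)
  then have "D \<noteq> {}"
    by auto
  have "\<exists>j. dist (from_nat_into D j) y < e" if "0 < e" for y :: 'a and e
  proof -
    have "y \<in> closure D"
      using D(2) by simp
    then obtain d where "d \<in> D" "dist d y < e"
      using \<open>0 < e\<close> by (auto simp: closure_approachable)
    then show ?thesis
      using from_nat_into_surj[OF D(1)] by metis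
  qed
  then show ?thesis
    using that by blast
qed

locale frechet_dense = frechet_setup +
  fixes z :: "nat \<Rightarrow> 'a"
  assumes dense: "\<And>y e. 0 < e \<Longrightarrow> \<exists>j. dist (z j) y < e"
begin

lemma dense_sequence_tendsto: "\<exists>js. (\<lambda>n. z (js n)) \<longlonglongrightarrow> w"
proof -
  have "\<forall>n. \<exists>j. dist (z j) w < 1 / Suc n"
    using dense by simp
  then obtain js where js: "\<And>n. dist (z (js n)) w < 1 / Suc n"
    by metis
  have "(\<lambda>n. dist (z (js n)) w) \<longlonglongrightarrow> 0"
    using js by (intro tendsto_sandwich[OF _ _ tendsto_const LIMSEQ_Suc[OF lim_const_over_n[of 1]]])
      (auto intro!: always_eventually less_imp_le)
  then show ?thesis
    using tendsto_dist_iff by blast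
qed

lemma objective_ge_of_dense:
  assumes "\<And>j. a \<le> objective (z j)"
  shows "a \<le> objective w"
proof -
  obtain js where "(\<lambda>n. z (js n)) \<longlonglongrightarrow> w"
    using dense_sequence_tendsto by blast
  then have "(\<lambda>n. objective (z (js n))) \<longlonglongrightarrow> objective w"
    by (rule objective_tendsto)
  then show ?thesis
    using assms by (intro LIMSEQ_le_const) auto
qed

lemma far_from_approximation:
  obtains LL where "\<And>J. far_from z (LL J) w" "\<And>y. (\<lambda>J. dist_minorant z (LL J) y) \<longlonglongrightarrow> dist w y"
proof -
  have "\<forall>J j. \<exists>q::rat. dist w (z j) - 1 / Suc J < of_rat q \<and> of_rat q < dist w (z j)"
    by (intro allI of_rat_dense) simp
  then obtain q :: "nat \<Rightarrow> nat \<Rightarrow> rat" where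
    q: "\<And>J j. dist w (z j) - 1 / Suc J < of_rat (q J j)" "\<And>J j. of_rat (q J j) < dist w (z j)"
    by metis
  define LL where "LL J = map (\<lambda>j. (j, q J j)) [0..<J]" for J
  have far: "far_from z (LL J) w" for J
    using q(2) by (auto simp: far_from_def LL_def)
  have "(\<lambda>J. dist_minorant z (LL J) y) \<longlonglongrightarrow> dist w y" for y
  proof (rule LIMSEQ_I)
    fix \<eta> :: real assume \<eta>: "0 < \<eta>"
    obtain j where j: "dist (z j) y < \<eta> / 3"
      using dense[of "\<eta> / 3"] \<eta> by auto
    obtain J0 :: nat where J0: "1 / Suc J0 < \<eta> / 3"
      using reals_Archimedean \<eta> by (metis divide_pos_pos inverse_eq_divide of_nat_Suc zero_less_numeral)
    show "\<exists>J0. \<forall>J\<ge>J0. norm (dist_minorant z (LL J) y - dist w y) < \<eta>"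
    proof (intro exI allI impI)
      fix J assume J: "max (Suc j) J0 \<le> J"
      then have "of_rat (q J j) - dist (z j) y \<le> dist_minorant z (LL J) y"
        by (intro dist_minorant_ge) (auto simp: LL_def)
      moreover have "1 / Suc J \<le> 1 / Suc J0"
        using J by (intro divide_left_mono) auto
      moreover have "dist w y \<le> dist w (z j) + dist (z j) y"
        by (rule dist_triangle)
      moreover have "dist w (z j) - 1 / Suc J < of_rat (q J j)"
        by (rule q(1))
      ultimately have "dist w y - \<eta> < dist_minorant z (LL J) y"
        using j J0 by linarith
      then show "norm (dist_minorant z (LL J) y - dist w y) < \<eta>"
        using dist_minorant_le_dist[OF far, of J y] \<eta> by auto
    qed
  qed
  then show ?thesis
    using far that by blast
qed

lemma dense_ball_subset:
  assumes "0 < r"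
  obtains j n where "y \<in> ball (z j) (1 / Suc n)" "ball (z j) (1 / Suc n) \<subseteq> ball y r"
proof -
  obtain n :: nat where n: "1 / Suc n < r / 2"
    using reals_Archimedean assms by (metis half_gt_zero inverse_eq_divide of_nat_Suc)
  obtain j where j: "dist (z j) y < 1 / Suc n"
    using dense[of "1 / Suc n"] by auto
  have "ball (z j) (1 / Suc n) \<subseteq> ball y r"
  proof
    fix u assume "u \<in> ball (z j) (1 / Suc n)"
    then have "dist y u < r"
      using j n dist_triangle[of y u "z j"] dist_commute[of y "z j"] by simp
    then show "u \<in> ball y r"
      by simp
  qed
  then show ?thesis
    using that j by (simp add: dist_commute)
qed

lemma exists_support_point: "\<exists>y0. \<forall>r>0. 0 < measure \<mu> (ball y0 r)"
proof (rule ccontr)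
  assume no_support: "\<not> ?thesis"
  define I where "I = {(j, n). measure \<mu> (ball (z j) (1 / Suc n)) = 0}"
  define N where "N = (\<Union>(j, n)\<in>I. ball (z j) (1 / Suc n))"
  have N: "N \<in> null_sets \<mu>"
    unfolding N_def by (intro null_sets_UN') (auto simp: I_def sets_\<mu> emeasure_eq_measure)
  have "y \<in> N" for y
  proof -
    obtain r where r: "0 < r" "\<not> 0 < measure \<mu> (ball y r)"
      using no_support by blast
    obtain j n where jn: "y \<in> ball (z j) (1 / Suc n)" "ball (z j) (1 / Suc n) \<subseteq> ball y r"
      using dense_ball_subset[OF r(1)] .
    have "measure \<mu> (ball (z j) (1 / Suc n)) \<le> measure \<mu> (ball y r)"
      by (rule finite_measure_mono[OF jn(2)]) (simp add: sets_\<mu>)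
    then have "measure \<mu> (ball (z j) (1 / Suc n)) = 0"
      using r(2) measure_nonneg[of \<mu> "ball (z j) (1 / Suc n)"] by linarith
    then have "(j, n) \<in> I"
      by (simp add: I_def)
    then show ?thesis
      using jn(1) unfolding N_def by (intro UN_I[of "(j, n)"]) auto
  qed
  then have "emeasure \<mu> (space \<mu>) \<le> emeasure \<mu> N"
    using N by (intro emeasure_mono) auto
  then show False
    using N by (simp add: emeasure_space_1 null_sets_def)
qed

(* Countable, so that the strong law holds for all test functions simultaneously almost surely. *)
definition test_functions :: "('a \<Rightarrow> real) set" where
  "test_functions = range (\<lambda>j. cost (z j)) \<union> range (\<lambda>(L, B). lower_cost (dist_minorant z L) (real B))
    \<union> range (\<lambda>R. indicator (cball x0 (real R))) \<union> range tail_moment"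

definition typical :: "(nat \<Rightarrow> 'a) \<Rightarrow> bool" where
  "typical ys \<longleftrightarrow> (\<forall>f\<in>test_functions. (\<lambda>n. (\<Sum>i<n. f (ys i)) / real n) \<longlonglongrightarrow> integral\<^sup>L \<mu> f)"

lemma typical_tendsto:
  assumes "typical ys" "f \<in> test_functions"
  shows "(\<lambda>n. (\<Sum>i<n. f (ys i)) / real n) \<longlonglongrightarrow> integral\<^sup>L \<mu> f"
  using assms by (simp add: typical_def)

lemma cost_in_test_functions: "cost (z j) \<in> test_functions"
  by (simp add: test_functions_def)

lemma lower_cost_in_test_functions: "lower_cost (dist_minorant z L) (real B) \<in> test_functions"
  unfolding test_functions_def by (auto intro!: image_eqI[where x="(L, B)"])

lemma countable_test_functions: "countable test_functions"
  by (simp add: test_functions_def)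

lemma integrable_dist_minorant_lower_cost:
  assumes "0 \<le> B"
  shows "integrable \<mu> (lower_cost (dist_minorant z L) B)"
  using assms dist_minorant_le_add_dist[of z L _ x0]
  by (intro integrable_lower_cost[where D="dist_minorant z L x0"]) (auto simp: dist_minorant_nonneg add.commute)

lemma integrable_test_functions: "f \<in> test_functions \<Longrightarrow> integrable \<mu> f"
  unfolding test_functions_def
  by (auto simp: integrable_cost integrable_dist_minorant_lower_cost integrable_tail_moment sets_\<mu>
      less_top[symmetric] intro!: integrable_real_indicator)

lemma AE_typical:
  fixes Y :: "nat \<Rightarrow> 'b \<Rightarrow> 'a"
  assumes "prob_space M" "\<And>i. Y i \<in> borel_measurable M"
    and "prob_space.indep_vars M (\<lambda>_. borel) Y UNIV" "\<And>i. distr M borel (Y i) = \<mu>"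
  shows "AE \<omega> in M. typical (\<lambda>i. Y i \<omega>)"
  unfolding typical_def using countable_test_functions
  by (intro AE_ball_countable[THEN iffD2] ballI strong_law_of_large_numbers[OF assms]
      integrable_test_functions)

lemma typical_sample_means_bounded:
  assumes "typical ys"
  obtains B where "\<forall>\<^sub>F n in sequentially. \<forall>x\<in>sample_frechet_means p ys n. dist x x0 \<le> B"
proof -
  obtain R :: nat where R: "3 / 4 < measure \<mu> (cball x0 R)" "p * integral\<^sup>L \<mu> (tail_moment R) < 1 / 4"
    using exists_radius by blast
  have space: "space \<mu> = UNIV"
    using sets_eq_imp_space_eq[OF sets_\<mu>] by simp
  have "(\<lambda>n. (\<Sum>i<n. indicator (cball x0 (real R)) (ys i)) / real n) \<longlonglongrightarrow> measure \<mu> (cball x0 R)"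
    using typical_tendsto[OF assms, of "indicator (cball x0 (real R))"] by (simp add: test_functions_def space)
  then have "\<forall>\<^sub>F n in sequentially. 1 / 2 < (\<Sum>i<n. indicator (cball x0 (real R)) (ys i)) / real n"
    using R(1) by (intro order_tendstoD(1)) auto
  moreover have "(\<lambda>n. p * ((\<Sum>i<n. tail_moment R (ys i)) / real n)) \<longlonglongrightarrow> p * integral\<^sup>L \<mu> (tail_moment R)"
    using typical_tendsto[OF assms] by (intro tendsto_mult tendsto_const) (simp add: test_functions_def)
  then have "\<forall>\<^sub>F n in sequentially. p * ((\<Sum>i<n. tail_moment R (ys i)) / real n) < 1 / 4"
    using R(2) by (intro order_tendstoD(2)) auto
  ultimately have "\<forall>\<^sub>F n in sequentially. \<forall>x\<in>sample_frechet_means p ys n.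
      dist x x0 \<le> 2 * real R + 2 * real R powr p + 1"
    using eventually_gt_at_top[of 0]
  proof eventually_elim
    case (elim n)
    then show ?case
      by (auto intro!: sample_frechet_mean_dist_le simp: pos_less_divide_eq pos_divide_less_eq)
  qed
  then show ?thesis
    by (rule that)
qed

end

section \<open>Consistency\<close>

lemma frequently_sequentially_subseq:
  assumes "\<exists>\<^sub>F n in sequentially. P n"
  shows "\<exists>r :: nat \<Rightarrow> nat. strict_mono r \<and> (\<forall>k. P (r k))"
proof -
  have "infinite {n. P n}"
    using assms by (simp add: frequently_sequentially infinite_nat_iff_unbounded_le)
  then show ?thesis
    using infinite_enumerate by blast
qed

lemma less_SUP_INF_dist_imp:
  fixes A K :: "'a::metric_space set"
  assumes "ennreal \<epsilon> < (SUP a\<in>A. INF x\<in>K. ennreal (dist a x))" "0 \<le> \<epsilon>"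
  shows "\<exists>a\<in>A. \<forall>x\<in>K. \<epsilon> < dist a x"
proof -
  obtain a where a: "a \<in> A" "ennreal \<epsilon> < (INF x\<in>K. ennreal (dist a x))"
    using assms(1) by (auto simp: less_SUP_iff)
  have "\<epsilon> < dist a x" if "x \<in> K" for x
    using less_INF_D[OF a(2) that] assms(2) by (simp add: ennreal_less_iff)
  then show ?thesis
    using a(1) by blast
qed

lemma SUP_INF_dist_tendsto_0:
  fixes A :: "nat \<Rightarrow> 'a::metric_space set" and K :: "'a set"
  assumes limit_points: "\<And>(nk :: nat \<Rightarrow> nat) xs. strict_mono nk \<Longrightarrow> (\<And>k. xs k \<in> A (nk k)) \<Longrightarrow>
      \<exists>x\<in>K. \<exists>s. strict_mono s \<and> (\<lambda>k. dist (xs (s k)) x) \<longlonglongrightarrow> 0"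
  shows "(\<lambda>n. SUP a\<in>A n. INF x\<in>K. ennreal (dist a x)) \<longlonglongrightarrow> 0"
proof (rule order_tendstoI)
  fix e :: ennreal assume "0 < e"
  then obtain b where b: "0 < b" "b < e"
    using dense by blast
  then have "b < top"
    using less_le_trans top_greatest by blast
  define \<epsilon> where "\<epsilon> = enn2real b"
  have \<epsilon>: "0 < \<epsilon>" "ennreal \<epsilon> < e"
    using b \<open>b < top\<close> by (simp_all add: \<epsilon>_def enn2real_positive_iff)
  show "\<forall>\<^sub>F n in sequentially. (SUP a\<in>A n. INF x\<in>K. ennreal (dist a x)) < e"
  proof (rule ccontr)
    assume "\<not> ?thesis"
    then have "\<exists>\<^sub>F n in sequentially. \<exists>a\<in>A n. \<forall>x\<in>K. \<epsilon> < dist a x"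
      unfolding not_eventually
      by (rule frequently_elim1) (use \<epsilon> in \<open>auto intro!: less_SUP_INF_dist_imp intro: less_le_trans simp: not_less\<close>)
    then obtain nk :: "nat \<Rightarrow> nat" where nk: "strict_mono nk" "\<And>k. \<exists>a\<in>A (nk k). \<forall>x\<in>K. \<epsilon> < dist a x"
      using frequently_sequentially_subseq by blast
    then obtain xs :: "nat \<Rightarrow> 'a" where xs: "\<And>k. xs k \<in> A (nk k)" "\<And>k x. x \<in> K \<Longrightarrow> \<epsilon> < dist (xs k) x"
      by metis
    obtain x s where "x \<in> K" "(\<lambda>k. dist (xs (s k)) x) \<longlonglongrightarrow> 0"
      using limit_points[OF nk(1) xs(1)] by blast
    then obtain k where "dist (xs (s k)) x < \<epsilon>"
      using order_tendstoD(2)[of _ 0 sequentially \<epsilon>] \<epsilon>(1) by (auto simp: eventually_sequentially)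
    then show False
      using xs(2)[OF \<open>x \<in> K\<close>, of "s k"] by simp
  qed
qed (simp add: not_less)

locale typical_limit = frechet_dense +
  fixes c :: "(nat \<Rightarrow> 'a) \<Rightarrow> 'a \<Rightarrow> bool" and ys :: "nat \<Rightarrow> 'a" and nk :: "nat \<Rightarrow> nat"
    and xs :: "nat \<Rightarrow> 'a" and xstar :: 'a and B :: nat
  assumes weak: "is_weak_convergence c"
    and typical: "typical ys"
    and nk: "strict_mono nk"
    and sample_means: "\<And>k. xs k \<in> sample_frechet_means p ys (nk k)"
    and bounded: "\<And>k. dist (xs k) x0 \<le> real B"
    and limit: "c xs xstar"
begin

lemma eventually_dist_gt:
  assumes "r < dist xstar y"
  shows "\<forall>\<^sub>F k in sequentially. r < dist (xs k) y"
proof -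
  have "ereal (dist xstar y) \<le> liminf (\<lambda>k. ereal (dist (xs k) y))"
    using weak limit by (auto simp: is_weak_convergence_def)
  then have "ereal r < liminf (\<lambda>k. ereal (dist (xs k) y))"
    by (rule less_le_trans[rotated]) (simp add: assms)
  then show ?thesis
    by (auto dest: less_LiminfD)
qed

lemma dist_xstar_le: "dist xstar x0 \<le> real B"
proof (rule ccontr)
  assume "\<not> ?thesis"
  then have "\<forall>\<^sub>F k in sequentially. real B < dist (xs k) x0"
    by (intro eventually_dist_gt) simp
  then show False
    using bounded by (auto simp: eventually_sequentially not_less[symmetric])
qed

lemma eventually_far_from:
  assumes "far_from z L xstar"
  shows "\<forall>\<^sub>F k in sequentially. far_from z L (xs k)"
  using assms unfolding far_from_def
  by (intro eventually_ball_finite ballI) (auto intro: eventually_dist_gt simp: dist_commute)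

lemma integral_lower_cost_le_objective:
  assumes far: "\<forall>\<^sub>F k in sequentially. far_from z L (xs k)"
  shows "integral\<^sup>L \<mu> (lower_cost (dist_minorant z L) (real B)) \<le> objective w"
proof (rule objective_ge_of_dense)
  fix j
  let ?avg = "\<lambda>f n. (\<Sum>i<n. f (ys i)) / real n"
  have "\<forall>\<^sub>F k in sequentially. ?avg (lower_cost (dist_minorant z L) (real B)) (nk k) \<le> ?avg (cost (z j)) (nk k)"
    using far
  proof eventually_elim
    case (elim k)
    have "(\<Sum>i<nk k. lower_cost (dist_minorant z L) (real B) (ys i)) \<le> (\<Sum>i<nk k. cost (xs k) (ys i))"
      using bounded dist_minorant_le_dist[OF elim]
      by (intro sum_mono lower_cost_le_cost) (auto simp: dist_minorant_nonneg)
    also have "\<dots> \<le> (\<Sum>i<nk k. cost (z j) (ys i))"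
      by (rule sum_cost_le_of_sample_frechet_mean[OF sample_means])
    finally show ?case
      by (simp add: divide_right_mono)
  qed
  moreover have "(\<lambda>k. ?avg f (nk k)) \<longlonglongrightarrow> integral\<^sup>L \<mu> f" if "f \<in> test_functions" for f
    using LIMSEQ_subseq_LIMSEQ[OF typical_tendsto[OF typical that] nk] by (simp add: comp_def)
  ultimately show "integral\<^sup>L \<mu> (lower_cost (dist_minorant z L) (real B)) \<le> objective (z j)"
    unfolding objective_def
    by (intro tendsto_le[OF sequentially_bot]) (auto intro: cost_in_test_functions lower_cost_in_test_functions)
qed

lemma integral_lower_cost_max_le_objective:
  assumes far: "\<forall>\<^sub>F k in sequentially. far_from z L0 (xs k)"
  shows "integral\<^sup>L \<mu> (lower_cost (\<lambda>y. max (dist xstar y) (dist_minorant z L0 y)) (real B)) \<le> objective w"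
proof -
  obtain LL where LL: "\<And>J. far_from z (LL J) xstar" "\<And>y. (\<lambda>J. dist_minorant z (LL J) y) \<longlonglongrightarrow> dist xstar y"
    using far_from_approximation by blast
  define D where "D = dist xstar x0 + dist_minorant z L0 x0"
  have "(\<lambda>J. integral\<^sup>L \<mu> (lower_cost (dist_minorant z (LL J @ L0)) (real B)))
      \<longlonglongrightarrow> integral\<^sup>L \<mu> (lower_cost (\<lambda>y. max (dist xstar y) (dist_minorant z L0 y)) (real B))"
  proof (rule integral_lower_cost_tendsto[where D=D])
    show "dist_minorant z (LL J @ L0) y \<le> dist x0 y + D" for J y
      using dist_minorant_le_dist[OF LL(1), of J y] max_dist_minorant_le[of xstar y z L0 x0]
      by (auto simp: D_def dist_minorant_append)
    show "(\<lambda>J. dist_minorant z (LL J @ L0) y) \<longlonglongrightarrow> max (dist xstar y) (dist_minorant z L0 y)" for y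
      unfolding dist_minorant_append by (intro tendsto_max LL(2) tendsto_const)
  qed (auto simp: D_def dist_minorant_nonneg)
  moreover have "integral\<^sup>L \<mu> (lower_cost (dist_minorant z (LL J @ L0)) (real B)) \<le> objective w" for J
    using eventually_conj[OF eventually_far_from[OF LL(1)] far]
    by (intro integral_lower_cost_le_objective) (simp add: far_from_append)
  ultimately show ?thesis
    by (intro LIMSEQ_le_const2) auto
qed

lemma xstar_in_Mp: "xstar \<in> Mp p \<mu>"
proof -
  have "lower_cost (\<lambda>y. max (dist xstar y) (dist_minorant z [] y)) (real B) = cost xstar"
    using neg_envelope_le_cost[OF dist_xstar_le] by (auto simp: fun_eq_iff lower_cost_def cost_def)
  then show ?thesis
    using integral_lower_cost_max_le_objective[of "[]"]
    by (simp add: Mp_iff_objective objective_def far_from_def)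
qed

lemma eventually_dist_gap:
  assumes none: "\<not> (\<exists>s. strict_mono s \<and> (\<lambda>k. dist (xs (s k)) y) \<longlonglongrightarrow> dist xstar y)"
  shows "\<exists>\<gamma>>0. \<forall>\<^sub>F k in sequentially. dist xstar y + \<gamma> < dist (xs k) y"
proof -
  have "ereal (dist xstar y) \<le> liminf (\<lambda>k. ereal (dist (xs k) y))"
    using weak limit by (auto simp: is_weak_convergence_def)
  moreover have "liminf (\<lambda>k. ereal (dist (xs k) y)) \<noteq> ereal (dist xstar y)"
  proof
    assume "liminf (\<lambda>k. ereal (dist (xs k) y)) = ereal (dist xstar y)"
    moreover obtain s where "strict_mono s"
      "((\<lambda>k. ereal (dist (xs k) y)) \<circ> s) \<longlonglongrightarrow> liminf (\<lambda>k. ereal (dist (xs k) y))"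
      using liminf_subseq_lim by blast
    ultimately show False
      using none by (auto simp: comp_def)
  qed
  ultimately obtain q where q: "ereal (dist xstar y) < ereal q" "ereal q < liminf (\<lambda>k. ereal (dist (xs k) y))"
    using ereal_dense2 by (metis order_le_neq_trans)
  then have "\<forall>\<^sub>F k in sequentially. dist xstar y + (q - dist xstar y) < dist (xs k) y"
    using less_LiminfD[OF q(2)] by simp
  then show ?thesis
    using q(1) by (intro exI[of _ "q - dist xstar y"]) simp
qed

(* One more constraint near y0, satisfied along xs, raises the lower bound strictly above
   cost xstar on a ball around y0, while its integral still cannot exceed objective xstar. *)
lemma measure_ball_eq_0_if_dist_gap:
  assumes \<gamma>: "0 < \<gamma>" and gap: "\<forall>\<^sub>F k in sequentially. dist xstar y0 + \<gamma> < dist (xs k) y0"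
  shows "measure \<mu> (ball y0 (\<gamma> / 8)) = 0"
proof -
  define d where "d = dist xstar y0"
  obtain j where j: "dist (z j) y0 < \<gamma> / 4"
    using dense[where e="\<gamma> / 4" and y=y0] \<gamma> by auto
  obtain q :: rat where q: "d + \<gamma> / 2 < of_rat q" "of_rat q < d + 3 * \<gamma> / 4"
    using of_rat_dense[of "d + \<gamma> / 2" "d + 3 * \<gamma> / 4"] \<gamma> by auto
  define g where "g y = max (dist xstar y) (dist_minorant z [(j, q)] y)" for y
  have "\<forall>\<^sub>F k in sequentially. far_from z [(j, q)] (xs k)"
    using gap
  proof eventually_elim
    case (elim k)
    then show ?case
      using dist_triangle[of "xs k" y0 "z j"] j q by (simp add: far_from_def d_def)
  qed
  then have le: "integral\<^sup>L \<mu> (lower_cost g (real B)) \<le> objective xstar"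
    unfolding g_def by (rule integral_lower_cost_max_le_objective)
  have integrable: "integrable \<mu> (lower_cost g (real B))"
    unfolding g_def by (rule integrable_lower_cost_max) simp
  show ?thesis
  proof (rule measure_eq_0_if_integral_nonpos[where f="\<lambda>y. lower_cost g (real B) y - cost xstar y"])
    show "integrable \<mu> (\<lambda>y. lower_cost g (real B) y - cost xstar y)"
      using integrable integrable_cost by (rule Bochner_Integration.integrable_diff)
    show "integral\<^sup>L \<mu> (\<lambda>y. lower_cost g (real B) y - cost xstar y) \<le> 0"
      using le by (simp add: Bochner_Integration.integral_diff[OF integrable integrable_cost] objective_def)
    show "0 < lower_cost g (real B) y - cost xstar y" if "y \<in> ball y0 (\<gamma> / 8)" for y
    proof -
      have "of_rat q - dist (z j) y \<le> dist_minorant z [(j, q)] y"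
        by (rule dist_minorant_ge) simp
      then have "dist xstar y < g y"
        using that j q dist_triangle[of "z j" y y0] dist_triangle[of xstar y y0]
        by (simp add: g_def d_def dist_commute)
      then show ?thesis
        using cost_less_lower_cost by simp
    qed
  qed (auto simp: g_def cost_le_lower_cost)
qed

lemma exists_subseq_dist_tendsto: "\<exists>y s. strict_mono s \<and> (\<lambda>k. dist (xs (s k)) y) \<longlonglongrightarrow> dist xstar y"
proof (rule ccontr)
  assume none: "\<not> ?thesis"
  obtain y0 where y0: "\<And>r. 0 < r \<Longrightarrow> 0 < measure \<mu> (ball y0 r)"
    using exists_support_point by blast
  obtain \<gamma> where "0 < \<gamma>" "\<forall>\<^sub>F k in sequentially. dist xstar y0 + \<gamma> < dist (xs k) y0"
    using eventually_dist_gap[of y0] none by blast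
  then show False
    using measure_ball_eq_0_if_dist_gap y0[of "\<gamma> / 8"] by simp
qed

lemma limit_in_Mp: "xstar \<in> Mp p \<mu> \<and> (\<exists>s. strict_mono s \<and> (\<lambda>k. dist (xs (s k)) xstar) \<longlonglongrightarrow> 0)"
proof -
  obtain y s where s: "strict_mono s" "(\<lambda>k. dist (xs (s k)) y) \<longlonglongrightarrow> dist xstar y"
    using exists_subseq_dist_tendsto by blast
  have "c (xs \<circ> s) xstar"
    using weak limit s(1) by (auto simp: is_weak_convergence_def is_convergence_def)
  moreover have "\<And>s x y. c s x \<Longrightarrow> (\<lambda>n. dist (s n) y) \<longlonglongrightarrow> dist x y \<Longrightarrow> (\<lambda>n. dist (s n) x) \<longlonglongrightarrow> 0"
    using weak unfolding is_weak_convergence_def by blast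
  ultimately have "(\<lambda>k. dist ((xs \<circ> s) k) xstar) \<longlonglongrightarrow> 0"
    using s(2) by (simp add: comp_def)
  then show ?thesis
    using xstar_in_Mp s(1) by (auto simp: comp_def)
qed

end

lemma frechet_dense_distr:
  fixes Y :: "'b \<Rightarrow> 'a::metric_space" and z :: "nat \<Rightarrow> 'a"
  assumes M: "prob_space M" and Y: "Y \<in> borel_measurable M" and distr: "distr M borel Y = \<mu>"
    and p: "1 \<le> p" and moment: "(\<integral>\<^sup>+ y. ennreal (dist x0 y powr (p - 1)) \<partial>\<mu>) < \<infinity>"
    and dense: "\<And>y e. 0 < e \<Longrightarrow> \<exists>j. dist (z j) y < e"
  shows "frechet_dense \<mu> p x0 z"
proof -
  have sets_\<mu>: "sets \<mu> = sets borel"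
    using sets_distr[of M borel Y] by (simp add: distr)
  have "prob_space \<mu>"
    using prob_space.prob_space_distr[OF M Y] by (simp add: distr)
  moreover have "integrable \<mu> (\<lambda>y. dist x0 y powr (p - 1))"
    using moment by (intro integrableI_bounded) (simp_all add: measurable_cong_sets[OF sets_\<mu> refl])
  ultimately show ?thesis
    using sets_\<mu> p dense by (intro frechet_dense.intro frechet_setup.intro frechet_dense_axioms.intro)
qed

context frechet_dense
begin

lemma typical_consistency:
  fixes c :: "(nat \<Rightarrow> 'a) \<Rightarrow> 'a \<Rightarrow> bool"
  assumes weak: "is_weak_convergence c" and typical: "typical ys"
  shows "(\<lambda>n. SUP a\<in>sample_frechet_means p ys n. INF x\<in>Mp p \<mu>. ennreal (dist a x)) \<longlonglongrightarrow> 0"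
proof (rule SUP_INF_dist_tendsto_0)
  fix nk :: "nat \<Rightarrow> nat" and xs :: "nat \<Rightarrow> 'a"
  assume nk: "strict_mono nk" and xs: "\<And>k. xs k \<in> sample_frechet_means p ys (nk k)"
  obtain B where "\<forall>\<^sub>F n in sequentially. \<forall>x\<in>sample_frechet_means p ys n. dist x x0 \<le> B"
    using typical_sample_means_bounded[OF typical] by blast
  then have "\<forall>\<^sub>F k in sequentially. \<forall>x\<in>sample_frechet_means p ys (nk k). dist x x0 \<le> B"
    by (rule filterlim_iff[THEN iffD1, OF filterlim_subseq[OF nk], rule_format])
  then have "\<forall>\<^sub>F k in sequentially. dist (xs k) x0 \<le> B"
    by (rule eventually_mono) (use xs in blast)
  then obtain k0 where "\<And>k. k0 \<le> k \<Longrightarrow> dist (xs k) x0 \<le> B"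
    by (auto simp: eventually_sequentially)
  then have k0: "dist (xs (k + k0)) x0 \<le> real (nat \<lceil>B\<rceil>)" for k
    by (meson le_add2 order_trans real_nat_ceiling_ge)
  have W1: "\<And>s y B. (\<forall>n. dist (s n) y \<le> B) \<Longrightarrow> \<exists>(r :: nat \<Rightarrow> nat) x. strict_mono r \<and> c (s \<circ> r) x"
    using weak unfolding is_weak_convergence_def by blast
  obtain r :: "nat \<Rightarrow> nat" and xstar where r: "strict_mono r" "c ((\<lambda>k. xs (k + k0)) \<circ> r) xstar"
    using W1[of "\<lambda>k. xs (k + k0)" x0 "real (nat \<lceil>B\<rceil>)"] k0 by blast
  interpret typical_limit \<mu> p x0 z c ys "\<lambda>k. nk (r k + k0)" "\<lambda>k. xs (r k + k0)" xstar "nat \<lceil>B\<rceil>"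
  proof
    show "strict_mono (\<lambda>k. nk (r k + k0))"
      using nk r(1) by (simp add: strict_mono_def)
  qed (use weak typical xs k0 r(2) in \<open>simp_all add: comp_def\<close>)
  obtain s where "strict_mono s" "(\<lambda>k. dist (xs (r (s k) + k0)) xstar) \<longlonglongrightarrow> 0"
    using limit_in_Mp by blast
  moreover have "strict_mono (\<lambda>k. r (s k) + k0)"
    using r(1) \<open>strict_mono s\<close> by (simp add: strict_mono_def)
  ultimately show "\<exists>x\<in>Mp p \<mu>. \<exists>s. strict_mono s \<and> (\<lambda>k. dist (xs (s k)) x) \<longlonglongrightarrow> 0"
    using limit_in_Mp by blast
qed

lemma typical_consistency_empirical:
  fixes c :: "(nat \<Rightarrow> 'a) \<Rightarrow> 'a \<Rightarrow> bool"
  assumes "is_weak_convergence c" "typical (\<lambda>i. Y i \<omega>)"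
  shows "(\<lambda>n. SUP a\<in>Mp p (empirical_measure Y n \<omega>). INF x\<in>Mp p \<mu>. ennreal (dist a x)) \<longlonglongrightarrow> 0"
proof -
  have "\<forall>\<^sub>F n in sequentially. (SUP a\<in>sample_frechet_means p (\<lambda>i. Y i \<omega>) n. INF x\<in>Mp p \<mu>. ennreal (dist a x))
      = (SUP a\<in>Mp p (empirical_measure Y n \<omega>). INF x\<in>Mp p \<mu>. ennreal (dist a x))"
    using eventually_gt_at_top[of 0] by eventually_elim (simp add: Mp_empirical_measure)
  then show ?thesis
    by (rule Lim_transform_eventually[OF typical_consistency[OF assms]])
qed

end

theorem corollary4p1:
  fixes M :: "'b measure" and Y :: "nat \<Rightarrow> 'b \<Rightarrow> 'a::metric_space"
    and \<mu> :: "'a measure" and p :: real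
  assumes sep: "separable_space TYPE('a)"
    and weak: "admits_weak_convergence TYPE('a)"
    and p: "p \<ge> 1"
    and M: "prob_space M"
    and rv: "\<And>i. Y i \<in> borel_measurable M"
    and indep: "prob_space.indep_vars M (\<lambda>_. borel) Y UNIV"
    and distr: "\<And>i. distr M borel (Y i) = \<mu>"
    and moment: "\<exists>x. (\<integral>\<^sup>+ y. ennreal (dist x y powr (p - 1)) \<partial>\<mu>) < \<infinity>"
  shows "AE \<omega> in M. (\<lambda>n. SUP xb\<in>Mp p (empirical_measure Y n \<omega>).
                           INF x\<in>Mp p \<mu>. ennreal (dist xb x)) \<longlonglongrightarrow> 0"
proof -
  obtain c :: "(nat \<Rightarrow> 'a) \<Rightarrow> 'a \<Rightarrow> bool" where c: "is_weak_convergence c"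
    using weak by (auto simp: admits_weak_convergence_def)
  obtain z :: "nat \<Rightarrow> 'a" where z: "\<And>y e. 0 < e \<Longrightarrow> \<exists>j. dist (z j) y < e"
    using separable_space_dense_sequence[OF sep] by blast
  obtain x0 where x0: "(\<integral>\<^sup>+ y. ennreal (dist x0 y powr (p - 1)) \<partial>\<mu>) < \<infinity>"
    using moment by blast
  interpret frechet_dense \<mu> p x0 z
    using frechet_dense_distr[OF M rv distr p x0 z] .
  from AE_typical[OF M rv indep distr] show ?thesis
    by eventually_elim (rule typical_consistency_empirical[OF c])
qed

end
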